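(* Assume that for all $i,j\in I$ the map $u\mapsto\lambda_{ij}(u)$ is continuous on $U$, and that $f\colon I\times U\to\mathbb R$ is continuous. Then for every $w\in\mathrm C(\Delta_e)$ we have $\mathcal Gw\in\mathrm C(\Delta_e)$.
   Context: $I$, $O$ finite sets; $h\colon I\to O$ surjective and non-constant. $U$ compact metric space. For $u\in U$, $\Lambda(u)=(\lambda_{ij}(u))$ real with $\lambda_{ij}(u)\ge0$ for $i\ne j$ and zero row sums. $\mathbf f(u)=(f(i,u))_{i\in I}$ column vector; $\beta>0$. Measures on $I$ are row vectors in $\mathbb R^{|I|}$; $\Delta_a$ ($a\in O$) the probability measures supported in $h^{-1}(a)$; $\Delta_e=\bigcup_a\Delta_a$ (topology from $\mathbb R^{|I|}$); $\mathrm C(\Delta_e)$ the continuous real functions on $\Delta_e$; $\mathbb 1_{h^{-1}(a)}$ the column indicator of $h^{-1}(a)$. $F$: for $\nu\in\Delta_a$, $F_j(\nu,u)=[\nu\Lambda(u)]_j-(\nu\Lambda(u)\mathbb 1_{h^{-1}(a)})\nu_j$ for $j\in h^{-1}(a)$, $0$ otherwise. $H_b[\mu]$ ($b\in O$, $\mu\in\mathbb R^{|I|}$): $0$ off $h^{-1}(b)$, $\mu(i)/(\mu\mathbb 1_{h^{-1}(b)})$ on $h^{-1}(b)$ if $\mu\mathbb 1_{h^{-1}(b)}\ne0$, a fixed $\nu_b\in\Delta_b$ otherwise. For $\rho\in\Delta_a$: $r(\rho,u)=-\rho\Lambda(u)\mathbb 1_{h^{-1}(a)}$; $R(\rho,u;D)=\sum_b\mathbb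 1_D(H_b[\rho\Lambda(u)])q(\rho,u,b)$, $q(\rho,u,b)=\frac{\rho\Lambda(u)\mathbb 1_{h^{-1}(b)}}{-\rho\Lambda(u)\mathbb 1_{h^{-1}(a)}}\mathbb 1_{b\ne a}$ if the denominator is nonzero, else $q_a(b)$ ($q_a$ a fixed probability on $O\setminus\{a\}$). $L(\rho,s,u,w)=s[\rho\mathbf f(u)+r(\rho,u)\int_{\Delta_e}w(p)R(\rho,u;dp)]$. $A$ is the set of measurable maps $\alpha\colon[0,\infty)\to U$. For $\rho\in\Delta_a$, $\phi^\alpha_\rho$ solves $z'(t)=F(z(t),\alpha(t))$, $z(0)=\rho$ (it stays in $\Delta_a$), and $\chi^\alpha_\rho(t)=\exp\{-\int_0^tr(\phi^\alpha_\rho(s),\alpha(s))ds\}$. For bounded Borel $w$ on $\Delta_e$: $\mathcal Gw(\nu)=\inf_{\alpha\in A}\int_0^\infty e^{-\beta t}L(\phi^\alpha_\nu(t),\chi^\alpha_\nu(t),\alpha(t),w)\,dt$. *)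

theory Defs
  imports "HOL-Analysis.Analysis"
begin

text \<open>Measures on I are row vectors in real^'i; Lambda u is a real^'i^'i matrix with
  entries Lambda u $ i $ j = lambda_ij(u); nu v* Lambda u is the row vector nu Lambda(u).\<close>

definition Delta :: "('i::finite \<Rightarrow> 'o) \<Rightarrow> 'o \<Rightarrow> (real^'i) set" where
  "Delta h a = {\<nu>. (\<forall>i. 0 \<le> \<nu>$i) \<and> (\<Sum>i\<in>UNIV. \<nu>$i) = 1 \<and> (\<forall>i. h i \<noteq> a \<longrightarrow> \<nu>$i = 0)}"

definition Delta_e :: "('i::finite \<Rightarrow> 'o) \<Rightarrow> (real^'i) set" where
  "Delta_e h = (\<Union>a. Delta h a)"

definition blocksum :: "('i::finite \<Rightarrow> 'o) \<Rightarrow> 'o \<Rightarrow> real^'i \<Rightarrow> real" where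
  "blocksum h a \<mu> = (\<Sum>i | h i = a. \<mu>$i)"

text \<open>the (unique) a with nu in Delta_a, for nu in Delta_e\<close>
definition blk :: "('i::finite \<Rightarrow> 'o) \<Rightarrow> real^'i \<Rightarrow> 'o" where
  "blk h \<nu> = (THE a. \<nu> \<in> Delta h a)"

definition Fv :: "('i::finite \<Rightarrow> 'o) \<Rightarrow> ('u \<Rightarrow> real^'i^'i) \<Rightarrow> real^'i \<Rightarrow> 'u \<Rightarrow> real^'i" where
  "Fv h \<Lambda> \<nu> u = (\<chi> j. if h j = blk h \<nu>
      then (\<nu> v* \<Lambda> u)$j - blocksum h (blk h \<nu>) (\<nu> v* \<Lambda> u) * \<nu>$j else 0)"

definition Hb :: "('i::finite \<Rightarrow> 'o) \<Rightarrow> ('o \<Rightarrow> real^'i) \<Rightarrow> 'o \<Rightarrow> real^'i \<Rightarrow> real^'i" where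
  "Hb h nu0 b \<mu> = (if blocksum h b \<mu> \<noteq> 0
      then (\<chi> i. if h i = b then \<mu>$i / blocksum h b \<mu> else 0) else nu0 b)"

definition rr :: "('i::finite \<Rightarrow> 'o) \<Rightarrow> ('u \<Rightarrow> real^'i^'i) \<Rightarrow> real^'i \<Rightarrow> 'u \<Rightarrow> real" where
  "rr h \<Lambda> \<rho> u = - blocksum h (blk h \<rho>) (\<rho> v* \<Lambda> u)"

definition qq :: "('i::finite \<Rightarrow> 'o) \<Rightarrow> ('u \<Rightarrow> real^'i^'i) \<Rightarrow> ('o \<Rightarrow> 'o \<Rightarrow> real)
    \<Rightarrow> real^'i \<Rightarrow> 'u \<Rightarrow> 'o \<Rightarrow> real" where
  "qq h \<Lambda> qd \<rho> u b = (let a = blk h \<rho>; d = - blocksum h a (\<rho> v* \<Lambda> u) in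
      if d \<noteq> 0 then (if b \<noteq> a then blocksum h b (\<rho> v* \<Lambda> u) / d else 0) else qd a b)"

text \<open>integral of w against the discrete measure R(rho,u;.) = sum_b q(rho,u,b) delta_{H_b[rho Lambda(u)]}\<close>
definition intR :: "('i::finite \<Rightarrow> 'o::finite) \<Rightarrow> ('u \<Rightarrow> real^'i^'i) \<Rightarrow> ('o \<Rightarrow> real^'i)
    \<Rightarrow> ('o \<Rightarrow> 'o \<Rightarrow> real) \<Rightarrow> real^'i \<Rightarrow> 'u \<Rightarrow> (real^'i \<Rightarrow> real) \<Rightarrow> real" where
  "intR h \<Lambda> nu0 qd \<rho> u w = (\<Sum>b\<in>UNIV. w (Hb h nu0 b (\<rho> v* \<Lambda> u)) * qq h \<Lambda> qd \<rho> u b)"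

definition LL :: "('i::finite \<Rightarrow> 'o::finite) \<Rightarrow> ('u \<Rightarrow> real^'i^'i) \<Rightarrow> ('i \<Rightarrow> 'u \<Rightarrow> real)
    \<Rightarrow> ('o \<Rightarrow> real^'i) \<Rightarrow> ('o \<Rightarrow> 'o \<Rightarrow> real)
    \<Rightarrow> real^'i \<Rightarrow> real \<Rightarrow> 'u \<Rightarrow> (real^'i \<Rightarrow> real) \<Rightarrow> real" where
  "LL h \<Lambda> f nu0 qd \<rho> s u w =
     s * ((\<Sum>i\<in>UNIV. \<rho>$i * f i u) + rr h \<Lambda> \<rho> u * intR h \<Lambda> nu0 qd \<rho> u w)"

definition Ctrl :: "'u::metric_space set \<Rightarrow> (real \<Rightarrow> 'u) set" where
  "Ctrl U = {\<alpha>. (\<forall>t\<ge>0. \<alpha> t \<in> U) \<and> \<alpha> \<in> measurable (restrict_space lebesgue {0..}) borel}"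

text \<open>phi: the solution (in the Caratheodory/integral sense) of z' = F(z,alpha), z(0)=rho,
  staying in Delta_a; for t<0 it is normalised to rho.\<close>
definition phi :: "('i::finite \<Rightarrow> 'o) \<Rightarrow> ('u \<Rightarrow> real^'i^'i) \<Rightarrow> (real \<Rightarrow> 'u) \<Rightarrow> real^'i
    \<Rightarrow> real \<Rightarrow> real^'i" where
  "phi h \<Lambda> \<alpha> \<rho> = (THE z. (\<forall>t<0. z t = \<rho>) \<and>
     (\<forall>t\<ge>0. z t \<in> Delta h (blk h \<rho>)
        \<and> (\<lambda>s. Fv h \<Lambda> (z s) (\<alpha> s)) integrable_on {0..t}
        \<and> z t = \<rho> + integral {0..t} (\<lambda>s. Fv h \<Lambda> (z s) (\<alpha> s))))"

definition chi :: "('i::finite \<Rightarrow> 'o) \<Rightarrow> ('u \<Rightarrow> real^'i^'i) \<Rightarrow> (real \<Rightarrow> 'u) \<Rightarrow> real^'i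
    \<Rightarrow> real \<Rightarrow> real" where
  "chi h \<Lambda> \<alpha> \<rho> t = exp (- integral {0..t} (\<lambda>s. rr h \<Lambda> (phi h \<Lambda> \<alpha> \<rho> s) (\<alpha> s)))"

definition GG :: "('i::finite \<Rightarrow> 'o::finite) \<Rightarrow> 'u::metric_space set \<Rightarrow> ('u \<Rightarrow> real^'i^'i)
    \<Rightarrow> ('i \<Rightarrow> 'u \<Rightarrow> real) \<Rightarrow> real \<Rightarrow> ('o \<Rightarrow> real^'i) \<Rightarrow> ('o \<Rightarrow> 'o \<Rightarrow> real)
    \<Rightarrow> (real^'i \<Rightarrow> real) \<Rightarrow> real^'i \<Rightarrow> real" where
  "GG h U \<Lambda> f \<beta> nu0 qd w \<nu> = (INF \<alpha>\<in>Ctrl U.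
     (LINT t:{0..}|lebesgue. exp (- \<beta> * t) *
        LL h \<Lambda> f nu0 qd (phi h \<Lambda> \<alpha> \<nu> t) (chi h \<Lambda> \<alpha> \<nu> t) (\<alpha> t) w))"

end

theory Submission
  imports Defs
begin

text \<open>
  On each block \<open>Delta h a\<close> the vector field \<open>F\<close> agrees with a bounded, globally Lipschitz field
  obtained by clipping the coordinates to \<open>[0, 1]\<close>. Picard iteration solves the clipped equation
  for every control; its solutions stay in \<open>Delta h a\<close> (nonnegativity by a first-exit argument,
  total mass one by Gronwall) and are therefore the flows \<open>phi\<close>. Gronwall also makes \<open>phi\<close> and
  \<open>chi\<close> Lipschitz in the initial point on bounded time intervals, uniformly in the control.

  Along a trajectory the integrand of the value is a function of \<open>(phi, chi, \<Lambda>(u), f(u))\<close> which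
  is continuous on a compact set; the delicate point is the jump term \<open>(\<mu> \<one>\<^sub>b) w (H\<^sub>b[\<mu>])\<close>, which is
  continuous even where the mass \<open>\<mu> \<one>\<^sub>b\<close> vanishes because \<open>w\<close> is bounded. Uniform continuity
  and the discount make the costs of all controls equicontinuous in the initial point, so their
  infimum is continuous on every block, and hence on the finite closed union \<open>Delta_e h\<close>.
\<close>

section \<open>Integrals and integral inequalities\<close>

lemma gronwall_inequality:
  fixes d :: "real \<Rightarrow> real"
  assumes cont: "continuous_on {0..T} d" and K: "K \<ge> 0"
    and le: "\<And>t. t \<in> {0..T} \<Longrightarrow> d t \<le> \<delta> + K * integral {0..t} d"
    and t: "t \<in> {0..T}"
  shows "d t \<le> \<delta> * exp (K * t)"
proof -
  define g where "g x = exp (- K * x) * (\<delta> + K * integral {0..x} d)" for x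
  have ct: "continuous_on {0..t} d" using cont t by (auto intro: continuous_on_subset)
  have "g t \<le> g 0"
  proof (rule DERIV_nonpos_imp_decreasing_open[of 0 t g])
    show "0 \<le> t" using t by auto
    show "continuous_on {0..t} g"
      unfolding g_def
      by (intro continuous_intros indefinite_integral_continuous_1 integrable_continuous_real ct)
    fix x assume x: "0 < x" "x < t"
    have "((\<lambda>x. integral {0..x} d) has_real_derivative d x) (at x within {0..t})"
      using x by (intro integral_has_real_derivative ct) auto
    then have D: "((\<lambda>x. integral {0..x} d) has_real_derivative d x) (at x)"
      using x by (simp add: at_within_Icc_at)
    have "(g has_real_derivative K * exp (- K * x) * (d x - (\<delta> + K * integral {0..x} d))) (at x)"
      unfolding g_def by (auto intro!: derivative_eq_intros D simp: algebra_simps)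
    moreover have "K * exp (- K * x) * (d x - (\<delta> + K * integral {0..x} d)) \<le> 0"
      using le[of x] x t K by (intro mult_nonneg_nonpos) auto
    ultimately show "\<exists>y. (g has_real_derivative y) (at x) \<and> y \<le> 0" by blast
  qed
  then have "\<delta> + K * integral {0..t} d \<le> \<delta> * exp (K * t)"
    by (simp add: g_def exp_minus field_simps)
  with le[OF t] show ?thesis by linarith
qed

lemma integrable_on_Icc_if_bounded_measurable:
  fixes F :: "real \<Rightarrow> 'a::euclidean_space"
  assumes "F \<in> borel_measurable (lebesgue_on {0..})" "\<And>s. s \<ge> 0 \<Longrightarrow> norm (F s) \<le> M"
  shows "F integrable_on {0..t}"
proof (rule measurable_bounded_by_integrable_imp_integrable[where g="\<lambda>_. M"])
  show "F \<in> borel_measurable (lebesgue_on {0..t})"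
    by (rule measurable_restrict_mono[OF assms(1)]) auto
qed (use assms(2) in auto)

lemma lipschitz_on_integral_from_0:
  fixes F :: "real \<Rightarrow> 'a::euclidean_space"
  assumes int: "\<And>t. t \<ge> 0 \<Longrightarrow> F integrable_on {0..t}"
    and bnd: "\<And>s. s \<ge> 0 \<Longrightarrow> norm (F s) \<le> M"
  shows "M-lipschitz_on {0..} (\<lambda>t. integral {0..t} F)"
proof -
  have le: "dist (integral {0..t} F) (integral {0..s} F) \<le> M * (t - s)" if "0 \<le> s" "s \<le> t" for s t
  proof -
    have "integral {0..s} F + integral {s..t} F = integral {0..t} F"
      using int[of t] that by (intro Henstock_Kurzweil_Integration.integral_combine) auto
    then have "dist (integral {0..t} F) (integral {0..s} F) = norm (integral {s..t} F)"
      by (metis add_diff_cancel_left' dist_norm)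
    also have "\<dots> \<le> integral {s..t} (\<lambda>_. M)"
      using that int[of t] bnd
      by (intro integral_norm_bound_integral integrable_on_subinterval[OF int[of t]]) auto
    finally show ?thesis using that by (simp add: mult.commute)
  qed
  show ?thesis
  proof (rule lipschitz_onI)
    show "M \<ge> 0" using bnd[of 0] norm_ge_zero[of "F 0"] by linarith
    fix s t :: real assume "s \<in> {0..}" "t \<in> {0..}"
    then show "dist (integral {0..s} F) (integral {0..t} F) \<le> M * dist s t"
      using le[of s t] le[of t s] by (cases "s \<le> t") (auto simp: dist_commute dist_real_def)
  qed
qed

lemma continuous_on_integral_from_0:
  fixes F :: "real \<Rightarrow> 'a::euclidean_space"
  assumes "\<And>t. t \<ge> 0 \<Longrightarrow> F integrable_on {0..t}" "\<And>s. s \<ge> 0 \<Longrightarrow> norm (F s) \<le> M"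
  shows "continuous_on {0..} (\<lambda>t. integral {0..t} F)"
  using lipschitz_on_continuous_on[OF lipschitz_on_integral_from_0[OF assms]] .

lemma has_integral_power_from_0:
  fixes t :: real
  assumes "0 \<le> t"
  shows "((\<lambda>s. s ^ n) has_integral t ^ Suc n / Suc n) {0..t}"
proof -
  have "((\<lambda>s. s ^ Suc n / Suc n) has_real_derivative s ^ n) (at s within {0..t})" for s
    using DERIV_cdivide[OF DERIV_pow[of "Suc n" s], of "Suc n"]
    by (simp del: of_nat_Suc add: has_field_derivative_at_within)
  then have "((\<lambda>s. s ^ n) has_integral t ^ Suc n / Suc n - 0 ^ Suc n / Suc n) {0..t}"
    using assms by (intro fundamental_theorem_of_calculus)
      (auto simp flip: has_real_derivative_iff_has_vector_derivative)
  then show ?thesis by simp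
qed

text \<open>First-exit argument: after the last time in \<open>[0, t]\<close> at which \<open>x \<ge> 0\<close>, the
  derivative \<open>g\<close> would be nonnegative, so \<open>x\<close> cannot become negative.\<close>
lemma integral_equation_nonneg:
  fixes x g :: "real \<Rightarrow> real"
  assumes x_cont: "continuous_on {0..t} x" and g_int: "g integrable_on {0..t}"
    and x_eq: "\<And>s. s \<in> {0..t} \<Longrightarrow> x s = x 0 + integral {0..s} g"
    and x0: "0 \<le> x 0" and t: "0 \<le> t"
    and inward: "\<And>s. s \<in> {0..t} \<Longrightarrow> x s \<le> 0 \<Longrightarrow> 0 \<le> g s"
  shows "0 \<le> x t"
proof (rule ccontr)
  assume neg: "\<not> 0 \<le> x t"
  define Z where "Z = {s \<in> {0..t}. 0 \<le> x s}"
  define \<tau> where "\<tau> = Sup Z"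
  have bdd: "bdd_above Z" by (rule bdd_aboveI[of _ t]) (auto simp: Z_def)
  have "closed Z"
    unfolding Z_def by (intro continuous_on_closed_Collect_le x_cont continuous_on_const) auto
  moreover have "0 \<in> Z" using t x0 by (auto simp: Z_def)
  ultimately have "\<tau> \<in> Z" unfolding \<tau>_def using bdd by (intro closed_contains_Sup) auto
  then have \<tau>: "0 \<le> \<tau>" "\<tau> \<le> t" "0 \<le> x \<tau>" by (auto simp: Z_def)
  have after: "x s < 0" if s: "s \<in> {\<tau><..t}" for s
  proof (rule ccontr)
    assume "\<not> x s < 0"
    then have "s \<in> Z" using s \<tau> by (auto simp: Z_def)
    then have "s \<le> \<tau>" unfolding \<tau>_def using bdd by (rule cSup_upper)
    then show False using s by simp
  qed
  have "\<tau> < t" using \<tau> neg by (cases "\<tau> = t") auto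
  then have "continuous_on (closure {\<tau><..t}) x" "\<tau> \<in> closure {\<tau><..t}"
    using \<tau> by (auto intro: continuous_on_subset[OF x_cont])
  then have "x \<tau> \<le> 0"
    using after continuous_le_on_closure[of _ x \<tau> 0] by (meson less_imp_le)
  then have "0 \<le> g s" if "s \<in> {\<tau>..t}" for s
    using that after[of s] \<tau> by (cases "s = \<tau>") (auto intro!: inward)
  then have "0 \<le> integral {\<tau>..t} g"
    using \<tau> by (intro integral_nonneg integrable_on_subinterval[OF g_int]) auto
  moreover have "integral {0..\<tau>} g + integral {\<tau>..t} g = integral {0..t} g"
    using \<tau> g_int by (intro Henstock_Kurzweil_Integration.integral_combine) auto
  moreover have "x t = x 0 + integral {0..t} g" "x \<tau> = x 0 + integral {0..\<tau>} g"
    using \<tau> t by (auto intro: x_eq)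
  ultimately show False using \<tau> neg by linarith
qed

lemma abs_exp_neg_diff_le:
  fixes x y :: real
  assumes "0 \<le> x" "0 \<le> y"
  shows "\<bar>exp (- x) - exp (- y)\<bar> \<le> \<bar>x - y\<bar>"
proof -
  have le: "exp (- x) - exp (- y) \<le> y - x" if "0 \<le> x" "x \<le> y" for x y :: real
  proof -
    have "exp (- x) - exp (- y) = exp (- x) * (1 - exp (x - y))"
      by (simp add: algebra_simps flip: exp_add)
    also have "\<dots> \<le> 1 - exp (x - y)"
      using that by (intro mult_left_le_one_le) auto
    also have "\<dots> \<le> y - x" using exp_ge_add_one_self[of "x - y"] by linarith
    finally show ?thesis .
  qed
  show ?thesis using le[of x y] le[of y x] assms by (cases "x \<le> y") auto
qed

lemma dist_Pair_Pair_same_le: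
  "dist (a, b, c) (a', b', c) \<le> dist a a' + dist b b'"
proof -
  have "dist (a, b, c) (a', b', c) = sqrt ((dist a a')\<^sup>2 + (dist b b')\<^sup>2)"
    by (simp add: dist_Pair_Pair)
  also have "\<dots> \<le> dist a a' + dist b b'"
    using sqrt_sum_squares_le_sum_abs[of "dist a a'" "dist b b'"] by simp
  finally show ?thesis .
qed

text \<open>A difference of integrands that is \<open>\<eta>\<close>-small up to time \<open>T\<close> and bounded by \<open>L\<close> later,
  both up to the discount \<open>exp (- \<beta> t)\<close>, is dominated by \<open>c exp (- \<beta> t / 2)\<close> with
  \<open>c = \<eta> + L exp (- \<beta> T / 2)\<close>.\<close>
lemma discounted_integral_diff_le:
  fixes f1 f2 :: "real \<Rightarrow> real"
  assumes \<beta>: "0 < \<beta>" and int: "f1 integrable_on {0..}" "f2 integrable_on {0..}"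
    and \<eta>: "0 \<le> \<eta>" and L: "0 \<le> L"
    and near: "\<And>t. t \<in> {0..T} \<Longrightarrow> \<bar>f1 t - f2 t\<bar> \<le> \<eta> * exp (- \<beta> * t)"
    and far: "\<And>t. 0 \<le> t \<Longrightarrow> T \<le> t \<Longrightarrow> \<bar>f1 t - f2 t\<bar> \<le> L * exp (- \<beta> * t)"
  shows "\<bar>integral {0..} f1 - integral {0..} f2\<bar> \<le> 2 * (\<eta> + L * exp (- (\<beta> / 2) * T)) / \<beta>"
proof -
  define c where "c = \<eta> + L * exp (- (\<beta> / 2) * T)"
  have split: "exp (- \<beta> * t) = exp (- (\<beta> / 2) * t) * exp (- (\<beta> / 2) * t)" for t
    by (simp flip: exp_add)
  have pw: "norm (f1 t - f2 t) \<le> c * exp (- (\<beta> / 2) * t)" if t: "t \<in> {0..}" for t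
  proof (cases "t \<le> T")
    case True
    have "\<bar>f1 t - f2 t\<bar> \<le> \<eta> * exp (- \<beta> * t)" using near t True by auto
    also have "\<dots> \<le> \<eta> * exp (- (\<beta> / 2) * t)" using \<beta> \<eta> t by (intro mult_left_mono) auto
    also have "\<dots> \<le> c * exp (- (\<beta> / 2) * t)" using L by (intro mult_right_mono) (auto simp: c_def)
    finally show ?thesis by simp
  next
    case False
    have "\<bar>f1 t - f2 t\<bar> \<le> L * exp (- (\<beta> / 2) * t) * exp (- (\<beta> / 2) * t)"
      using far[of t] t False unfolding mult.assoc split[symmetric] by simp
    also have "\<dots> \<le> L * exp (- (\<beta> / 2) * T) * exp (- (\<beta> / 2) * t)"
      using False \<beta> L by (intro mult_right_mono mult_left_mono) auto
    also have "\<dots> \<le> c * exp (- (\<beta> / 2) * t)" using \<eta> by (intro mult_right_mono) (auto simp: c_def)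
    finally show ?thesis by simp
  qed
  have exp_int: "((\<lambda>t. c * exp (- (\<beta> / 2) * t)) has_integral c * (1 / (\<beta> / 2))) {0..}"
    using has_integral_mult_right[OF has_integral_exp_minus_to_infinity[of "\<beta> / 2" 0]] \<beta> by simp
  have "\<bar>integral {0..} f1 - integral {0..} f2\<bar> = norm (integral {0..} (\<lambda>t. f1 t - f2 t))"
    using integral_diff[OF int] by simp
  also have "\<dots> \<le> integral {0..} (\<lambda>t. c * exp (- (\<beta> / 2) * t))"
    using exp_int pw by (intro integral_norm_bound_integral integrable_diff[OF int]) auto
  also have "\<dots> = 2 * c / \<beta>" using integral_unique[OF exp_int] by simp
  finally show ?thesis by (simp add: c_def)
qed

lemma continuous_on_INF_equicontinuous:
  fixes J :: "'c \<Rightarrow> 'a::metric_space \<Rightarrow> real"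
  assumes A: "A \<noteq> {}"
    and bdd: "\<And>x. x \<in> S \<Longrightarrow> bdd_below ((\<lambda>\<alpha>. J \<alpha> x) ` A)"
    and equi: "\<And>x \<epsilon>. x \<in> S \<Longrightarrow> 0 < \<epsilon> \<Longrightarrow>
      \<exists>\<delta>>0. \<forall>y\<in>S. dist y x < \<delta> \<longrightarrow> (\<forall>\<alpha>\<in>A. \<bar>J \<alpha> y - J \<alpha> x\<bar> \<le> \<epsilon>)"
  shows "continuous_on S (\<lambda>x. INF \<alpha>\<in>A. J \<alpha> x)"
  unfolding continuous_on_iff
proof (intro ballI allI impI)
  fix x and e :: real assume x: "x \<in> S" and e: "0 < e"
  obtain \<delta> where \<delta>: "0 < \<delta>" and close: "\<And>y \<alpha>. y \<in> S \<Longrightarrow> dist y x < \<delta> \<Longrightarrow> \<alpha> \<in> A \<Longrightarrow>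
      \<bar>J \<alpha> y - J \<alpha> x\<bar> \<le> e / 2"
    using equi[OF x, of "e / 2"] e by auto
  have "dist (INF \<alpha>\<in>A. J \<alpha> y) (INF \<alpha>\<in>A. J \<alpha> x) < e" if y: "y \<in> S" "dist y x < \<delta>" for y
  proof -
    have "(INF \<alpha>\<in>A. J \<alpha> y) - e / 2 \<le> (INF \<alpha>\<in>A. J \<alpha> x)"
    proof (rule cINF_greatest[OF A])
      fix \<alpha> assume "\<alpha> \<in> A"
      then show "(INF \<alpha>\<in>A. J \<alpha> y) - e / 2 \<le> J \<alpha> x"
        using cINF_lower[OF bdd[OF y(1)], of \<alpha>] close[OF y, of \<alpha>] by linarith
    qed
    moreover have "(INF \<alpha>\<in>A. J \<alpha> x) - e / 2 \<le> (INF \<alpha>\<in>A. J \<alpha> y)"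
    proof (rule cINF_greatest[OF A])
      fix \<alpha> assume "\<alpha> \<in> A"
      then show "(INF \<alpha>\<in>A. J \<alpha> x) - e / 2 \<le> J \<alpha> y"
        using cINF_lower[OF bdd[OF x], of \<alpha>] close[OF y, of \<alpha>] by linarith
    qed
    ultimately show ?thesis using e by (simp add: dist_real_def)
  qed
  with \<delta> show "\<exists>d>0. \<forall>y\<in>S. dist y x < d \<longrightarrow> dist (INF \<alpha>\<in>A. J \<alpha> y) (INF \<alpha>\<in>A. J \<alpha> x) < e"
    by blast
qed

lemma exists_exp_neg_le:
  fixes c q :: real
  assumes "0 < c" "0 < q"
  shows "\<exists>T>0. exp (- c * T) \<le> q"
proof (intro exI conjI)
  have "1 / q \<le> exp (1 / q)" using exp_ge_add_one_self[of "1 / q"] by linarith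
  then have "inverse (exp (1 / q)) \<le> q"
    using le_imp_inverse_le[of "1 / q" "exp (1 / q)"] assms by simp
  then show "exp (- c * (1 / (c * q))) \<le> q"
    using assms by (simp add: exp_minus)
  show "0 < 1 / (c * q)" using assms by simp
qed

section \<open>Lipschitz integral equations\<close>

locale lipschitz_integral_equation =
  fixes G :: "'a::euclidean_space \<Rightarrow> real \<Rightarrow> 'a" and M K :: real
  assumes bounded: "\<And>x s. s \<ge> 0 \<Longrightarrow> norm (G x s) \<le> M"
    and lipschitz: "\<And>x y s. s \<ge> 0 \<Longrightarrow> norm (G x s - G y s) \<le> K * norm (x - y)"
    and K_nonneg: "0 \<le> K"
    and measurable: "\<And>z. continuous_on {0..} z \<Longrightarrow> (\<lambda>s. G (z s) s) \<in> borel_measurable (lebesgue_on {0..})"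
begin

definition solves :: "'a \<Rightarrow> (real \<Rightarrow> 'a) \<Rightarrow> bool" where
  "solves x0 z \<longleftrightarrow> (\<forall>t\<ge>0. (\<lambda>s. G (z s) s) integrable_on {0..t}
     \<and> z t = x0 + integral {0..t} (\<lambda>s. G (z s) s))"

lemma solvesD:
  assumes "solves x0 z" "0 \<le> t"
  shows "(\<lambda>s. G (z s) s) integrable_on {0..t}" "z t = x0 + integral {0..t} (\<lambda>s. G (z s) s)"
  using assms unfolding solves_def by blast+

lemma integrable_on_field: "continuous_on {0..} z \<Longrightarrow> (\<lambda>s. G (z s) s) integrable_on {0..t}"
  by (rule integrable_on_Icc_if_bounded_measurable[OF measurable bounded])

lemma continuous_on_integral_field:
  "(\<And>t. t \<ge> 0 \<Longrightarrow> (\<lambda>s. G (z s) s) integrable_on {0..t}) \<Longrightarrow>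
    continuous_on {0..} (\<lambda>t. x0 + integral {0..t} (\<lambda>s. G (z s) s))"
  by (intro continuous_intros continuous_on_integral_from_0[where M=M] bounded)

lemma solves_continuous:
  assumes "solves x0 z"
  shows "continuous_on {0..} z"
  using continuous_on_integral_field[of z x0] solvesD[OF assms]
  by (auto intro: continuous_on_eq)

lemma solves_cong:
  assumes z: "solves x0 z" and eq: "\<And>t. 0 \<le> t \<Longrightarrow> y t = z t"
  shows "solves x0 y"
  unfolding solves_def
proof (intro allI impI conjI)
  fix t :: real assume t: "0 \<le> t"
  have "G (y s) s = G (z s) s" if "s \<in> {0..t}" for s using that eq by simp
  note same = integrable_cong[of "{0..t}" "\<lambda>s. G (y s) s" "\<lambda>s. G (z s) s", OF this]
    integral_cong[of "{0..t}" "\<lambda>s. G (y s) s" "\<lambda>s. G (z s) s", OF this]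
  show "(\<lambda>s. G (y s) s) integrable_on {0..t}"
    and "y t = x0 + integral {0..t} (\<lambda>s. G (y s) s)"
    using solvesD[OF z t] eq[OF t] same by simp_all
qed

lemma solves_dist_le:
  assumes y: "solves x1 y" and z: "solves x2 z" and t: "t \<ge> 0"
  shows "norm (y t - z t) \<le> norm (x1 - x2) * exp (K * t)"
proof -
  define d where "d s = norm (y s - z s)" for s
  have dc: "continuous_on {0..t} d" unfolding d_def
    using solves_continuous[OF y] solves_continuous[OF z]
    by (intro continuous_intros) (auto intro: continuous_on_subset)
  have "d s \<le> norm (x1 - x2) + K * integral {0..s} d" if s: "s \<in> {0..t}" for s
  proof -
    let ?D = "\<lambda>r. G (y r) r - G (z r) r"
    have yi: "(\<lambda>r. G (y r) r) integrable_on {0..s}" and zi: "(\<lambda>r. G (z r) r) integrable_on {0..s}"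
      using solvesD(1)[OF y] solvesD(1)[OF z] s by auto
    have "y s - z s = (x1 - x2) + integral {0..s} ?D"
      using solvesD(2)[OF y] solvesD(2)[OF z] s integral_diff[OF yi zi] by simp
    then have "d s \<le> norm (x1 - x2) + norm (integral {0..s} ?D)"
      unfolding d_def by (simp add: norm_triangle_ineq)
    also have "norm (integral {0..s} ?D) \<le> integral {0..s} (\<lambda>r. K * d r)"
      using s lipschitz unfolding d_def
      by (intro integral_norm_bound_integral integrable_diff[OF yi zi] integrable_continuous_real
          continuous_intros continuous_on_subset[OF dc[unfolded d_def]]) auto
    finally show ?thesis by simp
  qed
  with gronwall_inequality[OF dc] K_nonneg t show ?thesis by (simp add: d_def)
qed

primrec picard :: "'a \<Rightarrow> nat \<Rightarrow> real \<Rightarrow> 'a" where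
  "picard x0 0 = (\<lambda>t. x0)"
| "picard x0 (Suc n) = (\<lambda>t. x0 + integral {0..t} (\<lambda>s. G (picard x0 n s) s))"

lemma continuous_on_picard: "continuous_on {0..} (picard x0 n)"
proof (induction n)
  case (Suc n)
  show ?case
    using continuous_on_integral_field[OF integrable_on_field[OF Suc.IH]] by simp
qed simp

lemma picard_step_le:
  assumes "t \<ge> 0"
  shows "norm (picard x0 (Suc n) t - picard x0 n t) \<le> M * K ^ n * t ^ Suc n / fact (Suc n)"
  using assms
proof (induction n arbitrary: t)
  case 0
  have "norm (integral {0..t} (\<lambda>s. G x0 s)) \<le> integral {0..t} (\<lambda>_. M)"
    using bounded integrable_on_field[of "\<lambda>_. x0"] by (intro integral_norm_bound_integral) auto
  with 0 show ?case by (simp add: mult.commute)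
next
  case (Suc n t)
  let ?c = "K * M * K ^ n / fact (Suc n)"
  have i: "(\<lambda>s. G (picard x0 m s) s) integrable_on {0..t}" for m
    by (rule integrable_on_field[OF continuous_on_picard])
  have step: "picard x0 (Suc m) t = x0 + integral {0..t} (\<lambda>s. G (picard x0 m s) s)" for m
    by simp
  have "norm (picard x0 (Suc (Suc n)) t - picard x0 (Suc n) t)
      = norm (integral {0..t} (\<lambda>s. G (picard x0 (Suc n) s) s - G (picard x0 n s) s))"
    unfolding step integral_diff[OF i i] by simp
  also have "\<dots> \<le> integral {0..t} (\<lambda>s. ?c * s ^ Suc n)"
  proof (rule integral_norm_bound_integral[OF integrable_diff[OF i i]])
    fix s assume s: "s \<in> {0..t}"
    have "norm (G (picard x0 (Suc n) s) s - G (picard x0 n s) s)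
        \<le> K * norm (picard x0 (Suc n) s - picard x0 n s)"
      using s by (intro lipschitz) auto
    also have "\<dots> \<le> K * (M * K ^ n * s ^ Suc n / fact (Suc n))"
      using Suc.IH[of s] s K_nonneg by (intro mult_left_mono) auto
    finally show "norm (G (picard x0 (Suc n) s) s - G (picard x0 n s) s) \<le> ?c * s ^ Suc n"
      by simp
  qed (intro integrable_continuous_real continuous_intros)
  also have "\<dots> = ?c * (t ^ Suc (Suc n) / Suc (Suc n))"
    using has_integral_mult_right[OF has_integral_power_from_0[OF Suc.prems]] by (rule integral_unique)
  also have "\<dots> = M * K ^ Suc n * t ^ Suc (Suc n) / fact (Suc (Suc n))"
    by (simp add: field_simps)
  finally show ?case .
qed

lemma picard_convergent:
  assumes t: "t \<ge> 0"
  shows "convergent (\<lambda>n. picard x0 n t)"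
proof -
  have M: "0 \<le> M" using bounded[of 0 x0] norm_ge_zero[of "G x0 0"] by linarith
  have bound: "norm (picard x0 (Suc n) t - picard x0 n t) \<le> (M * t) * ((K * t) ^ n / fact n)" for n
  proof -
    have "norm (picard x0 (Suc n) t - picard x0 n t) \<le> M * K ^ n * t ^ Suc n / fact (Suc n)"
      using picard_step_le[OF t] .
    also have "\<dots> \<le> M * K ^ n * t ^ Suc n / fact n"
      using M K_nonneg t by (intro divide_left_mono fact_mono) auto
    also have "\<dots> = (M * t) * ((K * t) ^ n / fact n)"
      by (simp add: power_mult_distrib)
    finally show ?thesis .
  qed
  have "summable (\<lambda>n. (M * t) * ((K * t) ^ n /\<^sub>R fact n))"
    by (intro summable_mult summable_exp_generic)
  then have "summable (\<lambda>n. (M * t) * ((K * t) ^ n / fact n))"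
    by (simp add: divide_inverse mult.commute)
  then have "summable (\<lambda>n. picard x0 (Suc n) t - picard x0 n t)"
    by (rule summable_comparison_test'[where N=0]) (rule bound)
  then have "(\<lambda>n. (\<Sum>i<n. picard x0 (Suc i) t - picard x0 i t) + x0)
      \<longlonglongrightarrow> suminf (\<lambda>n. picard x0 (Suc n) t - picard x0 n t) + x0"
    by (intro tendsto_add summable_LIMSEQ tendsto_const)
  then have "(\<lambda>n. picard x0 n t) \<longlonglongrightarrow> suminf (\<lambda>n. picard x0 (Suc n) t - picard x0 n t) + x0"
    unfolding sum_lessThan_telescope[of "\<lambda>i. picard x0 i t"] by simp
  then show ?thesis by (rule convergentI)
qed

text \<open>The pointwise limit of the Picard iterates solves the equation, by dominated convergence
  on each interval.\<close>
lemma solves_exists: "\<exists>z. solves x0 z"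
proof
  define z where "z t = lim (\<lambda>n. picard x0 n t)" for t
  have conv: "(\<lambda>n. picard x0 n s) \<longlonglongrightarrow> z s" if "s \<ge> 0" for s
    using picard_convergent[OF that] by (simp add: z_def convergent_LIMSEQ_iff)
  show "solves x0 z" unfolding solves_def
  proof (intro allI impI conjI)
    fix t :: real assume t: "t \<ge> 0"
    have "isCont (\<lambda>x. G x s) y" if "s \<ge> 0" for s y
    proof -
      have "K-lipschitz_on UNIV (\<lambda>x. G x s)"
        using that K_nonneg by (intro lipschitz_onI) (auto simp: dist_norm lipschitz)
      then show ?thesis
        using continuous_on_eq_continuous_at[OF open_UNIV] lipschitz_on_continuous_on by blast
    qed
    then have convG: "(\<lambda>n. G (picard x0 n s) s) \<longlonglongrightarrow> G (z s) s" if "s \<in> {0..t}" for s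
      using that by (intro isCont_tendsto_compose[OF _ conv]) auto
    have lim: "(\<lambda>s. G (z s) s) integrable_on {0..t}"
      "(\<lambda>n. integral {0..t} (\<lambda>s. G (picard x0 n s) s)) \<longlonglongrightarrow> integral {0..t} (\<lambda>s. G (z s) s)"
      using dominated_convergence[where h="\<lambda>_. M", OF integrable_on_field[OF continuous_on_picard]
          integrable_const_ivl _ convG] bounded by auto
    then show "(\<lambda>s. G (z s) s) integrable_on {0..t}" by blast
    have "(\<lambda>n. picard x0 (Suc n) t) \<longlonglongrightarrow> x0 + integral {0..t} (\<lambda>s. G (z s) s)"
      using tendsto_add[OF tendsto_const lim(2)] by simp
    moreover have "(\<lambda>n. picard x0 (Suc n) t) \<longlonglongrightarrow> z t"
      using conv[OF t] by (rule LIMSEQ_Suc)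
    ultimately show "z t = x0 + integral {0..t} (\<lambda>s. G (z s) s)"
      by (rule LIMSEQ_unique[rotated])
  qed
qed

end

section \<open>Block simplices and the clipped vector field\<close>

lemma Delta_unique:
  assumes "\<nu> \<in> Delta h a" "\<nu> \<in> Delta h b"
  shows "a = b"
proof -
  have "(\<Sum>i\<in>UNIV. \<nu>$i) \<noteq> 0" using assms(1) by (simp add: Delta_def)
  then obtain i where "\<nu>$i \<noteq> 0" by (metis (no_types) sum.neutral)
  with assms show ?thesis by (auto simp: Delta_def)
qed

lemma blk_Delta: "\<nu> \<in> Delta h a \<Longrightarrow> blk h \<nu> = a"
  unfolding blk_def by (rule the_equality) (auto dest: Delta_unique)

lemma norm_Delta_le_1:
  assumes "\<nu> \<in> Delta h a"
  shows "norm \<nu> \<le> 1"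
proof -
  have "norm \<nu> \<le> (\<Sum>i\<in>UNIV. \<bar>\<nu>$i\<bar>)" by (rule norm_le_l1_cart)
  also have "\<dots> = 1" using assms by (simp add: Delta_def)
  finally show ?thesis .
qed

lemma closed_Delta: "closed (Delta h a)"
proof -
  have "Delta h a = (\<Inter>i. {\<nu>. 0 \<le> \<nu>$i}) \<inter> {\<nu>. (\<Sum>i\<in>UNIV. \<nu>$i) = 1}
      \<inter> (\<Inter>i\<in>{i. h i \<noteq> a}. {\<nu>. \<nu>$i = 0})"
    by (auto simp: Delta_def)
  also have "closed \<dots>"
    by (intro closed_Int closed_INT closed_Collect_le closed_Collect_eq continuous_intros ballI)
  finally show ?thesis .
qed

lemma compact_Delta: "compact (Delta h a)"
  unfolding compact_eq_bounded_closed bounded_iff using closed_Delta norm_Delta_le_1 by metis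

lemma Delta_subset_Delta_e: "Delta h a \<subseteq> Delta_e h"
  by (auto simp: Delta_e_def)

lemma compact_Delta_e: "compact (Delta_e (h :: 'i::finite \<Rightarrow> 'o::finite))"
  unfolding Delta_e_def by (intro compact_Union) (auto intro: compact_Delta)

lemma blocksum_diff: "blocksum h a (x - y) = blocksum h a x - blocksum h a y"
  by (simp add: blocksum_def sum_subtractf)

lemma abs_blocksum_le: "\<bar>blocksum h a (y :: real^'i::finite)\<bar> \<le> real CARD('i) * norm y"
proof -
  have "\<bar>blocksum h a y\<bar> \<le> (\<Sum>i | h i = a. \<bar>y$i\<bar>)" unfolding blocksum_def by (rule sum_abs)
  also have "\<dots> \<le> (\<Sum>i\<in>UNIV. \<bar>y$i\<bar>)" by (intro sum_mono2) auto
  also have "\<dots> \<le> (\<Sum>i\<in>(UNIV::'i set). norm y)"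
    by (rule sum_mono) (rule component_le_norm_cart)
  finally show ?thesis by simp
qed

lemma sum_blocksum: "(\<Sum>b\<in>UNIV. blocksum h b y) = (\<Sum>i\<in>UNIV. y$i)"
  for h :: "'i::finite \<Rightarrow> 'o::finite"
  using sum.group[of UNIV UNIV h "\<lambda>i. y$i"] by (simp add: blocksum_def)

lemma norm_vector_matrix_mult_le:
  fixes M :: "real^'i::finite^'i"
  assumes "\<And>i j. \<bar>M$i$j\<bar> \<le> B"
  shows "norm (x v* M) \<le> real CARD('i) * real CARD('i) * B * norm x"
proof -
  have "norm (x v* M) \<le> onorm ((*v) (transpose M)) * norm x"
    using onorm[OF matrix_vector_mul_bounded_linear, of "transpose M" x] by simp
  also have "\<dots> \<le> real CARD('i) * real CARD('i) * B * norm x"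
    using assms by (intro mult_right_mono onorm_le_matrix_component) (auto simp: transpose_def)
  finally show ?thesis .
qed

lemma vector_matrix_bound_nonneg:
  fixes M :: "real^'i::finite^'i"
  assumes "\<And>x. norm (x v* M) \<le> C * norm x"
  shows "0 \<le> C"
  using order_trans[OF norm_ge_zero assms[of "axis undefined 1"]] by simp

lemma abs_blocksum_vector_matrix_mult_le:
  fixes M :: "real^'i::finite^'i"
  assumes M: "\<And>x. norm (x v* M) \<le> C * norm x" and z: "norm z \<le> r"
  shows "\<bar>blocksum h a (z v* M)\<bar> \<le> real CARD('i) * (C * r)"
proof -
  have "\<bar>blocksum h a (z v* M)\<bar> \<le> real CARD('i) * norm (z v* M)" by (rule abs_blocksum_le)
  also have "\<dots> \<le> real CARD('i) * (C * r)"
    using M[of z] z vector_matrix_bound_nonneg[OF M]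
    by (intro mult_left_mono) (auto intro: order_trans mult_left_mono)
  finally show ?thesis .
qed

definition rate_matrix :: "real^'i::finite^'i \<Rightarrow> bool" where
  "rate_matrix M \<longleftrightarrow> (\<forall>i j. i \<noteq> j \<longrightarrow> 0 \<le> M$i$j) \<and> (\<forall>i. (\<Sum>j\<in>UNIV. M$i$j) = 0)"

lemma sum_vector_matrix_mult_rate_matrix:
  assumes "rate_matrix M"
  shows "(\<Sum>j\<in>UNIV. (\<rho> v* M)$j) = 0"
proof -
  have "(\<Sum>j\<in>UNIV. (\<rho> v* M)$j) = (\<Sum>i\<in>UNIV. \<rho>$i * (\<Sum>j\<in>UNIV. M$i$j))"
    by (simp add: vector_matrix_mult_def sum_distrib_left) (rule sum.swap)
  then show ?thesis using assms by (simp add: rate_matrix_def)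
qed

lemma vector_matrix_mult_nonneg_off_block:
  assumes M: "rate_matrix M" and \<rho>: "\<rho> \<in> Delta h a" and "h i \<noteq> a"
  shows "0 \<le> (\<rho> v* M)$i"
  unfolding vector_matrix_mult_def vec_lambda_beta
proof (intro sum_nonneg)
  fix k show "0 \<le> \<rho>$k * M$k$i"
  proof (cases "h k = a")
    case True
    then have "k \<noteq> i" using assms(3) by auto
    then show ?thesis using True M \<rho> by (simp add: Delta_def rate_matrix_def)
  qed (use \<rho> in \<open>simp add: Delta_def\<close>)
qed

text \<open>On \<open>Delta h a\<close> the field \<open>Fv\<close> is \<open>\<nu> \<mapsto> mask (\<nu> M) - (\<nu> M \<one>\<^sub>a) \<nu>\<close>, which is
  only locally Lipschitz.  Clipping the coordinates of \<open>\<nu>\<close> to \<open>[0, 1]\<close> and to the block \<open>a\<close>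
  makes it globally Lipschitz and bounded without changing it on \<open>Delta h a\<close>.\<close>

definition clip :: "('i::finite \<Rightarrow> 'o) \<Rightarrow> 'o \<Rightarrow> real^'i \<Rightarrow> real^'i" where
  "clip h a \<nu> = (\<chi> i. if h i = a then max 0 (min 1 (\<nu>$i)) else 0)"

definition block_mask :: "('i::finite \<Rightarrow> 'o) \<Rightarrow> 'o \<Rightarrow> real^'i \<Rightarrow> real^'i" where
  "block_mask h a y = (\<chi> j. if h j = a then y$j else 0)"

definition clipped_field :: "('i::finite \<Rightarrow> 'o) \<Rightarrow> 'o \<Rightarrow> real^'i \<Rightarrow> real^'i^'i \<Rightarrow> real^'i" where
  "clipped_field h a \<nu> M =
     block_mask h a (clip h a \<nu> v* M) - blocksum h a (clip h a \<nu> v* M) *\<^sub>R clip h a \<nu>"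

lemma clip_Delta:
  assumes "\<nu> \<in> Delta h a"
  shows "clip h a \<nu> = \<nu>"
proof -
  have "0 \<le> \<nu>$i \<and> \<nu>$i \<le> 1 \<and> (h i \<noteq> a \<longrightarrow> \<nu>$i = 0)" for i
    using assms member_le_sum[of i UNIV "\<lambda>j. \<nu>$j"] by (simp add: Delta_def)
  then show ?thesis by (simp add: vec_eq_iff clip_def)
qed

lemma Fv_eq_clipped_field:
  assumes "\<nu> \<in> Delta h a"
  shows "Fv h \<Lambda> \<nu> u = clipped_field h a \<nu> (\<Lambda> u)"
proof -
  have "h j \<noteq> a \<Longrightarrow> \<nu>$j = 0" for j using assms by (simp add: Delta_def)
  then show ?thesis
    by (simp add: vec_eq_iff Fv_def clipped_field_def block_mask_def blk_Delta[OF assms]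
        clip_Delta[OF assms])
qed

lemma norm_clip_le: "norm (clip h a (x :: real^'i::finite)) \<le> real CARD('i)"
proof -
  have "norm (clip h a x) \<le> (\<Sum>i\<in>UNIV. \<bar>clip h a x $ i\<bar>)" by (rule norm_le_l1_cart)
  also have "\<dots> \<le> (\<Sum>i\<in>(UNIV::'i set). 1)" by (intro sum_mono) (auto simp: clip_def)
  finally show ?thesis by simp
qed

lemma norm_clip_diff_le: "norm (clip h a x - clip h a y) \<le> norm (x - y)"
  by (rule norm_le_componentwise_cart) (auto simp: clip_def)

lemma norm_block_mask_le: "norm (block_mask h a y) \<le> norm y"
  by (rule norm_le_componentwise_cart) (auto simp: block_mask_def)

lemma clipped_field_lipschitz:
  fixes M :: "real^'i::finite^'i"
  assumes M: "\<And>x. norm (x v* M) \<le> C * norm x"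
  shows "norm (clipped_field h a x M - clipped_field h a y M)
    \<le> C * (1 + 2 * real CARD('i) ^ 2) * norm (x - y)"
proof -
  define n where "n = real CARD('i)"
  define cx cy where "cx = clip h a x" and "cy = clip h a y"
  have C: "0 \<le> C" using M by (rule vector_matrix_bound_nonneg)
  have d: "norm (cx - cy) \<le> norm (x - y)" and c: "norm cx \<le> n" "norm cy \<le> n"
    by (simp_all add: cx_def cy_def n_def norm_clip_diff_le norm_clip_le)
  note bs = abs_blocksum_vector_matrix_mult_le[OF M, where h=h and a=a, folded n_def]
  have t1: "norm (block_mask h a ((cx - cy) v* M)) \<le> C * norm (x - y)"
    using norm_block_mask_le M[of "cx - cy"] d C by (meson mult_left_mono order_trans)
  have t2: "norm (blocksum h a (cx v* M) *\<^sub>R (cx - cy)) \<le> n * (C * n) * norm (x - y)"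
    unfolding norm_scaleR by (rule mult_mono[OF bs[OF c(1)] d]) (use C in \<open>auto simp: n_def\<close>)
  have t3: "norm (blocksum h a ((cx - cy) v* M) *\<^sub>R cy) \<le> n * (C * norm (x - y)) * n"
    unfolding norm_scaleR by (rule mult_mono[OF bs[OF d] c(2)]) (use C in \<open>auto simp: n_def\<close>)
  have "clipped_field h a x M - clipped_field h a y M = block_mask h a ((cx - cy) v* M)
      - (blocksum h a (cx v* M) *\<^sub>R (cx - cy) + blocksum h a ((cx - cy) v* M) *\<^sub>R cy)"
    by (simp add: vec_eq_iff clipped_field_def block_mask_def cx_def cy_def
        vector_matrix_mult_diff_distrib blocksum_diff algebra_simps)
  also have "norm \<dots> \<le> C * norm (x - y) + (n * (C * n) * norm (x - y) + n * (C * norm (x - y)) * n)"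
    using t1 t2 t3 norm_triangle_ineq4[of "block_mask h a ((cx - cy) v* M)"
        "blocksum h a (cx v* M) *\<^sub>R (cx - cy) + blocksum h a ((cx - cy) v* M) *\<^sub>R cy"]
      norm_triangle_ineq[of "blocksum h a (cx v* M) *\<^sub>R (cx - cy)" "blocksum h a ((cx - cy) v* M) *\<^sub>R cy"]
    by linarith
  finally show ?thesis by (simp add: n_def algebra_simps power2_eq_square)
qed

lemma norm_clipped_field_le:
  fixes M :: "real^'i::finite^'i"
  assumes M: "\<And>x. norm (x v* M) \<le> C * norm x"
  shows "norm (clipped_field h a x M) \<le> C * real CARD('i) * (1 + real CARD('i) ^ 2)"
proof -
  define n where "n = real CARD('i)"
  define c where "c = clip h a x"
  have C: "0 \<le> C" using M by (rule vector_matrix_bound_nonneg)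
  have c_le: "norm c \<le> n" by (simp add: c_def n_def norm_clip_le)
  have cM: "norm (c v* M) \<le> C * n" using M[of c] c_le C by (meson mult_left_mono order_trans)
  have "\<bar>blocksum h a (c v* M)\<bar> * norm c \<le> (n * (C * n)) * n"
    using abs_blocksum_vector_matrix_mult_le[OF M c_le, of h a] c_le C
    by (intro mult_mono) (auto simp: n_def)
  moreover have "norm (block_mask h a (c v* M)) \<le> C * n"
    using norm_block_mask_le cM by (rule order_trans)
  moreover have "norm (clipped_field h a x M)
      \<le> norm (block_mask h a (c v* M)) + \<bar>blocksum h a (c v* M)\<bar> * norm c"
    unfolding clipped_field_def c_def[symmetric]
    using norm_triangle_ineq4[of "block_mask h a (c v* M)" "blocksum h a (c v* M) *\<^sub>R c"] by simp
  ultimately show ?thesis by (simp add: n_def algebra_simps power2_eq_square)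
qed

lemma continuous_on_clipped_field: "continuous_on S (\<lambda>p. clipped_field h a (fst p) (snd p))"
proof -
  have if_const: "continuous_on S (\<lambda>x. if P then f x else g x)"
    if "continuous_on S f" "continuous_on S g" for P and f g :: "_ \<Rightarrow> real"
    using that by (cases P) simp_all
  show ?thesis
    unfolding clipped_field_def block_mask_def clip_def blocksum_def vector_matrix_mult_def
    by (simp only: vec_lambda_beta) (intro continuous_on_vec_lambda if_const continuous_intros)
qed

lemma clipped_field_inward:
  assumes "\<And>i. i \<noteq> j \<Longrightarrow> 0 \<le> M$i$j" and "h j = a" and "z$j \<le> 0"
  shows "0 \<le> clipped_field h a z M $ j"
proof -
  have "0 \<le> clip h a z $ i * M$i$j" for i
    using assms by (cases "i = j") (auto simp: clip_def)
  then show ?thesis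
    using assms by (simp add: clipped_field_def block_mask_def vector_matrix_mult_def clip_def sum_nonneg)
qed

lemma abs_one_minus_sum_clip_le:
  fixes x :: "real^'i::finite"
  assumes nonneg: "\<And>j. 0 \<le> x$j" and off: "\<And>j. h j \<noteq> a \<Longrightarrow> x$j = 0"
  shows "\<bar>1 - (\<Sum>j\<in>UNIV. clip h a x $ j)\<bar> \<le> \<bar>1 - (\<Sum>j\<in>UNIV. x$j)\<bar>"
proof -
  have cj: "clip h a x $ j = min (x$j) 1" for j
    using nonneg[of j] off[of j] by (auto simp: clip_def)
  show ?thesis
  proof (cases "\<forall>j. x$j \<le> 1")
    case True
    then show ?thesis by (simp add: cj)
  next
    case False
    then obtain k where k: "1 < x$k" by (auto simp: not_le)
    have "clip h a x $ k \<le> (\<Sum>j\<in>UNIV. clip h a x $ j)"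
      by (rule member_le_sum) (auto simp: cj nonneg)
    moreover have "(\<Sum>j\<in>UNIV. clip h a x $ j) \<le> (\<Sum>j\<in>UNIV. x$j)"
      by (rule sum_mono) (simp add: cj)
    ultimately show ?thesis using k by (simp add: cj)
  qed
qed

text \<open>The total mass of the clipped field is \<open>S (1 - \<Sum>\<^sub>j clip x $ j)\<close>, where \<open>S\<close> is
  the blocksum of \<open>clip x M\<close>.\<close>
lemma abs_sum_clipped_field_le:
  fixes M :: "real^'i::finite^'i"
  assumes M: "\<And>x. norm (x v* M) \<le> C * norm x"
    and nonneg: "\<And>j. 0 \<le> x$j" and off: "\<And>j. h j \<noteq> a \<Longrightarrow> x$j = 0"
  shows "\<bar>\<Sum>j\<in>UNIV. clipped_field h a x M $ j\<bar>
    \<le> real CARD('i) * C * real CARD('i) * \<bar>1 - (\<Sum>j\<in>UNIV. x$j)\<bar>"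
proof -
  define c where "c = clip h a x"
  define S where "S = blocksum h a (c v* M)"
  have C: "0 \<le> C" using M by (rule vector_matrix_bound_nonneg)
  have "(\<Sum>j\<in>UNIV. block_mask h a y $ j) = blocksum h a y" for y
    by (simp add: block_mask_def blocksum_def sum.If_cases)
  then have "(\<Sum>j\<in>UNIV. clipped_field h a x M $ j) = S - S * (\<Sum>j\<in>UNIV. c$j)"
    by (simp add: clipped_field_def c_def[symmetric] S_def[symmetric] sum_subtractf sum_distrib_left)
  also have "\<dots> = S * (1 - (\<Sum>j\<in>UNIV. c$j))" by (simp add: algebra_simps)
  finally have "(\<Sum>j\<in>UNIV. clipped_field h a x M $ j) = S * (1 - (\<Sum>j\<in>UNIV. c$j))" .
  moreover have "\<bar>S\<bar> \<le> real CARD('i) * (C * real CARD('i))"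
    unfolding S_def c_def by (rule abs_blocksum_vector_matrix_mult_le[OF M norm_clip_le])
  moreover have "\<bar>1 - (\<Sum>j\<in>UNIV. c$j)\<bar> \<le> \<bar>1 - (\<Sum>j\<in>UNIV. x$j)\<bar>"
    unfolding c_def using nonneg off by (rule abs_one_minus_sum_clip_le)
  ultimately show ?thesis
    using mult_mono[of "\<bar>S\<bar>" "real CARD('i) * (C * real CARD('i))"] C by (simp add: abs_mult mult.assoc)
qed

section \<open>Exit rates and jump terms\<close>

definition exit_rate :: "('i::finite \<Rightarrow> 'o) \<Rightarrow> 'o \<Rightarrow> real^'i \<Rightarrow> real^'i^'i \<Rightarrow> real" where
  "exit_rate h a \<nu> M = - blocksum h a (\<nu> v* M)"

lemma rr_eq_exit_rate: "\<nu> \<in> Delta h a \<Longrightarrow> rr h \<Lambda> \<nu> u = exit_rate h a \<nu> (\<Lambda> u)"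
  by (simp add: rr_def exit_rate_def blk_Delta)

lemma continuous_on_exit_rate: "continuous_on S (\<lambda>p. exit_rate h a (fst p) (snd p))"
  unfolding exit_rate_def blocksum_def vector_matrix_mult_def by (intro continuous_intros)

lemma exit_rate_nonneg:
  assumes M: "rate_matrix M" and \<nu>: "\<nu> \<in> Delta h a"
  shows "0 \<le> exit_rate h a \<nu> M"
proof -
  have "(\<Sum>j\<in>UNIV. (\<nu> v* M)$j) = blocksum h a (\<nu> v* M) + (\<Sum>j | h j \<noteq> a. (\<nu> v* M)$j)"
    using sum.If_cases[of UNIV "\<lambda>j. h j = a" "\<lambda>j. (\<nu> v* M)$j" "\<lambda>j. (\<nu> v* M)$j"]
    by (simp add: blocksum_def Compl_eq Collect_neg_eq[symmetric])
  moreover have "0 \<le> (\<Sum>j | h j \<noteq> a. (\<nu> v* M)$j)"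
    using vector_matrix_mult_nonneg_off_block[OF M \<nu>] by (intro sum_nonneg) auto
  ultimately show ?thesis
    using sum_vector_matrix_mult_rate_matrix[OF M] by (simp add: exit_rate_def)
qed

lemma abs_exit_rate_diff_le:
  fixes M :: "real^'i::finite^'i"
  assumes "\<And>x. norm (x v* M) \<le> C * norm x"
  shows "\<bar>exit_rate h a x M - exit_rate h a y M\<bar> \<le> real CARD('i) * (C * norm (x - y))"
  using abs_blocksum_vector_matrix_mult_le[OF assms order_refl, where z="x - y" and h=h and a=a]
  by (simp add: exit_rate_def vector_matrix_mult_diff_distrib blocksum_diff)

lemma abs_exit_rate_le:
  fixes M :: "real^'i::finite^'i"
  assumes "\<And>x. norm (x v* M) \<le> C * norm x" and "\<nu> \<in> Delta h a"
  shows "\<bar>exit_rate h a \<nu> M\<bar> \<le> real CARD('i) * C"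
  using abs_blocksum_vector_matrix_mult_le[OF assms(1) norm_Delta_le_1[OF assms(2)], where h=h and a=a]
  by (simp add: exit_rate_def)

definition nonneg_on_block :: "('i::finite \<Rightarrow> 'o) \<Rightarrow> 'o \<Rightarrow> (real^'i) set" where
  "nonneg_on_block h b = {y. \<forall>i. h i = b \<longrightarrow> 0 \<le> y$i}"

definition jump_term :: "('i::finite \<Rightarrow> 'o) \<Rightarrow> ('o \<Rightarrow> real^'i) \<Rightarrow> (real^'i \<Rightarrow> real) \<Rightarrow> 'o
    \<Rightarrow> real^'i \<Rightarrow> real" where
  "jump_term h nu0 w b y = blocksum h b y * w (Hb h nu0 b y)"

lemma Hb_in_Delta:
  assumes y: "y \<in> nonneg_on_block h b" and nu0: "nu0 b \<in> Delta h b"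
  shows "Hb h nu0 b y \<in> Delta h b"
proof (cases "blocksum h b y = 0")
  case False
  have "0 \<le> blocksum h b y"
    using y unfolding blocksum_def nonneg_on_block_def by (intro sum_nonneg) auto
  with False have pos: "0 < blocksum h b y" by simp
  have "(\<Sum>i\<in>UNIV. if h i = b then y$i / blocksum h b y else 0) = (\<Sum>i | h i = b. y$i / blocksum h b y)"
    by (simp add: sum.If_cases)
  also have "\<dots> = blocksum h b y / blocksum h b y"
    by (simp only: blocksum_def sum_divide_distrib)
  also have "\<dots> = 1" using pos by simp
  finally show ?thesis using pos y False by (auto simp: Hb_def Delta_def nonneg_on_block_def)
qed (use nu0 in \<open>simp add: Hb_def\<close>)

lemma continuous_within_mult_vanishing:
  fixes g k :: "'a::t2_space \<Rightarrow> real"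
  assumes g: "continuous (at x within S) g" "g x = 0" and k: "\<And>y. y \<in> S \<Longrightarrow> \<bar>k y\<bar> \<le> C"
  shows "continuous (at x within S) (\<lambda>y. g y * k y)"
proof -
  have lim: "((\<lambda>y. C * \<bar>g y\<bar>) \<longlongrightarrow> 0) (at x within S)"
    using tendsto_mult_right[OF tendsto_rabs[OF g(1)[unfolded continuous_within]], of C] g(2)
    by (simp add: mult.commute)
  have "\<bar>g y\<bar> * \<bar>k y\<bar> \<le> C * \<bar>g y\<bar>" if "y \<in> S" for y
    using mult_left_mono[OF k[OF that] abs_ge_zero[of "g y"]] by (simp add: mult.commute)
  then have "\<forall>\<^sub>F y in at x within S. norm (g y * k y) \<le> C * \<bar>g y\<bar>"
    unfolding eventually_at_filter by (intro always_eventually) (simp add: abs_mult)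
  from Lim_null_comparison[OF this lim] have "((\<lambda>y. g y * k y) \<longlongrightarrow> 0) (at x within S)" .
  then show ?thesis using g(2) by (simp add: continuous_within)
qed

lemma continuous_on_blocksum: "continuous_on S (blocksum h b)"
  unfolding blocksum_def by (intro continuous_intros)

lemma continuous_on_Hb: "continuous_on {y. blocksum h b y \<noteq> 0} (Hb h nu0 b)"
proof -
  have "continuous_on {y. blocksum h b y \<noteq> 0}
      (\<lambda>y. \<chi> i. if h i = b then y$i / blocksum h b y else 0)"
  proof (intro continuous_on_vec_lambda)
    fix i show "continuous_on {y. blocksum h b y \<noteq> 0}
        (\<lambda>y. if h i = b then y$i / blocksum h b y else 0)"
      by (cases "h i = b") (auto intro!: continuous_intros continuous_on_blocksum)
  qed
  then show ?thesis by (rule continuous_on_eq) (simp add: Hb_def)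
qed

lemma continuous_on_jump_term:
  fixes h :: "'i::finite \<Rightarrow> 'o::finite"
  assumes w: "continuous_on (Delta_e h) w" and nu0: "nu0 b \<in> Delta h b"
  shows "continuous_on (nonneg_on_block h b) (jump_term h nu0 w b)"
  unfolding continuous_on_eq_continuous_within
proof
  let ?Y = "nonneg_on_block h b" and ?O = "{y. blocksum h b y \<noteq> 0}"
  fix y0 assume y0: "y0 \<in> ?Y"
  have H: "Hb h nu0 b y \<in> Delta_e h" if "y \<in> ?Y" for y
    using Hb_in_Delta[of y h b nu0, OF that nu0] Delta_subset_Delta_e[of h b] by blast
  have bs: "continuous (at y0 within ?Y) (blocksum h b)"
    unfolding blocksum_def by (intro continuous_intros)
  show "continuous (at y0 within ?Y) (jump_term h nu0 w b)"
  proof (cases "blocksum h b y0 = 0")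
    case True
    obtain W where "\<And>x. x \<in> Delta_e h \<Longrightarrow> \<bar>w x\<bar> \<le> W"
      using compact_imp_bounded[OF compact_continuous_image[OF w compact_Delta_e]]
      by (auto simp: bounded_iff)
    with True H show ?thesis
      unfolding jump_term_def by (intro continuous_within_mult_vanishing bs) auto
  next
    case False
    have "open ?O" unfolding blocksum_def by (intro open_Collect_neq continuous_intros)
    have "continuous_on (?Y \<inter> ?O) (\<lambda>y. w (Hb h nu0 b y))"
      by (rule continuous_on_compose2[OF w continuous_on_subset[OF continuous_on_Hb]]) (use H in auto)
    then have "continuous_on (?Y \<inter> ?O) (jump_term h nu0 w b)"
      unfolding jump_term_def by (intro continuous_intros continuous_on_blocksum)
    then have "continuous (at y0 within ?Y \<inter> ?O) (jump_term h nu0 w b)"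
      using y0 False by (simp add: continuous_on_eq_continuous_within)
    moreover have "at y0 within ?Y = at y0 within ?Y \<inter> ?O"
      using False \<open>open ?O\<close> by (intro at_within_nhd[of _ ?O]) auto
    ultimately show ?thesis by simp
  qed
qed

text \<open>Hence the default jump distribution \<open>qd\<close>, which \<open>qq\<close> falls back to where the exit rate
  vanishes, never matters.\<close>
lemma blocksum_eq_0_if_exit_rate_eq_0:
  fixes h :: "'i::finite \<Rightarrow> 'o::finite"
  assumes M: "rate_matrix M" and \<rho>: "\<rho> \<in> Delta h a" and "exit_rate h a \<rho> M = 0"
  shows "blocksum h b (\<rho> v* M) = 0"
proof (cases "b = a")
  case False
  have nonneg: "0 \<le> blocksum h c (\<rho> v* M)" if "c \<noteq> a" for c
    unfolding blocksum_def using vector_matrix_mult_nonneg_off_block[OF M \<rho>] that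
    by (intro sum_nonneg) auto
  have "(\<Sum>c\<in>UNIV. blocksum h c (\<rho> v* M)) = 0"
    using sum_vector_matrix_mult_rate_matrix[OF M] by (simp add: sum_blocksum)
  then have "(\<Sum>c\<in>UNIV - {a}. blocksum h c (\<rho> v* M)) = 0"
    using assms(3) by (simp add: sum.remove[of UNIV a] exit_rate_def)
  with nonneg False show ?thesis by (subst (asm) sum_nonneg_eq_0_iff) auto
qed (use assms(3) in \<open>simp add: exit_rate_def\<close>)

lemma LL_eq_jump_terms:
  assumes \<rho>: "\<rho> \<in> Delta h a" and M: "rate_matrix (\<Lambda> u)"
  shows "LL h \<Lambda> f nu0 qd \<rho> s u w = s * ((\<Sum>i\<in>UNIV. \<rho>$i * f i u)
    + (\<Sum>b\<in>UNIV. if b = a then 0 else jump_term h nu0 w b (\<rho> v* \<Lambda> u)))"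
proof -
  have "rr h \<Lambda> \<rho> u * (w (Hb h nu0 b (\<rho> v* \<Lambda> u)) * qq h \<Lambda> qd \<rho> u b)
      = (if b = a then 0 else jump_term h nu0 w b (\<rho> v* \<Lambda> u))" for b
    using blocksum_eq_0_if_exit_rate_eq_0[OF M \<rho>, of b]
    by (auto simp: rr_def qq_def jump_term_def exit_rate_def blk_Delta[OF \<rho>] Let_def)
  then show ?thesis
    by (simp add: LL_def intR_def sum_distrib_left)
qed

section \<open>The controlled filter\<close>

locale control_problem =
  fixes h :: "'i::finite \<Rightarrow> 'o::finite"
    and U :: "'u::metric_space set"
    and \<Lambda> :: "'u \<Rightarrow> real^'i^'i"
    and f :: "'i \<Rightarrow> 'u \<Rightarrow> real"
    and \<beta> :: real
    and nu0 :: "'o \<Rightarrow> real^'i"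
    and qd :: "'o \<Rightarrow> 'o \<Rightarrow> real"
    and w :: "real^'i \<Rightarrow> real"
  assumes U_compact: "compact U" and U_nonempty: "U \<noteq> {}"
    and rate_matrix_Lambda: "\<And>u. u \<in> U \<Longrightarrow> rate_matrix (\<Lambda> u)"
    and continuous_Lambda: "continuous_on U \<Lambda>"
    and continuous_f: "\<And>i. continuous_on U (f i)"
    and beta_pos: "0 < \<beta>"
    and nu0_in_Delta: "\<And>b. nu0 b \<in> Delta h b"
    and continuous_w: "continuous_on (Delta_e h) w"
begin

definition flow_bound :: real where
  "flow_bound = real CARD('i) * real CARD('i) * (SUP u\<in>U. norm (\<Lambda> u))"

lemma norm_flow_le:
  assumes u: "u \<in> U"
  shows "norm (x v* \<Lambda> u) \<le> flow_bound * norm x"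
proof -
  have "bounded (\<Lambda> ` U)"
    by (intro compact_imp_bounded compact_continuous_image continuous_Lambda U_compact)
  then have "norm (\<Lambda> u) \<le> (SUP u\<in>U. norm (\<Lambda> u))"
    using u by (intro cSUP_upper) (auto simp flip: bdd_above_norm simp: image_image)
  moreover have "\<bar>\<Lambda> u $ i $ j\<bar> \<le> norm (\<Lambda> u)" for i j
    using component_le_norm_cart[of "\<Lambda> u $ i" j] Finite_Cartesian_Product.norm_nth_le[of "\<Lambda> u" i] by linarith
  ultimately show ?thesis
    unfolding flow_bound_def by (intro norm_vector_matrix_mult_le) (auto intro: order_trans)
qed

lemma flow_bound_nonneg: "0 \<le> flow_bound"
  using U_nonempty norm_flow_le vector_matrix_bound_nonneg by blast

lemma Ctrl_in_U: "\<alpha> \<in> Ctrl U \<Longrightarrow> 0 \<le> s \<Longrightarrow> \<alpha> s \<in> U"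
  by (auto simp: Ctrl_def)

lemma Ctrl_nonempty: "Ctrl U \<noteq> {}"
proof -
  obtain u where "u \<in> U" using U_nonempty by blast
  then have "(\<lambda>_. u) \<in> Ctrl U" by (auto simp: Ctrl_def)
  then show ?thesis by blast
qed

lemma measurable_Ctrl_comp:
  assumes "\<alpha> \<in> Ctrl U" "continuous_on U g"
  shows "(\<lambda>s. g (\<alpha> s)) \<in> borel_measurable (lebesgue_on {0..})"
proof -
  have "\<alpha> \<in> measurable (lebesgue_on {0..}) (restrict_space borel U)"
    using assms(1) by (intro measurable_restrict_space2) (auto simp: Ctrl_def space_restrict_space)
  from measurable_comp[OF this borel_measurable_continuous_on_restrict[OF assms(2)]]
  show ?thesis by (simp add: comp_def)
qed

lemma measurable_along_Ctrl:
  fixes z :: "real \<Rightarrow> real^'i" and F :: "real^'i \<Rightarrow> real^'i^'i \<Rightarrow> 'b::euclidean_space"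
  assumes "\<alpha> \<in> Ctrl U" "continuous_on {0..} z" "continuous_on UNIV (\<lambda>p. F (fst p) (snd p))"
  shows "(\<lambda>s. F (z s) (\<Lambda> (\<alpha> s))) \<in> borel_measurable (lebesgue_on {0..})"
proof -
  have "z \<in> borel_measurable (lebesgue_on {0..})"
    by (rule continuous_imp_measurable_on_sets_lebesgue[OF assms(2)]) auto
  from borel_measurable_Pair[OF this measurable_Ctrl_comp[OF assms(1) continuous_Lambda]]
  have "(\<lambda>s. (z s, \<Lambda> (\<alpha> s))) \<in> borel_measurable (lebesgue_on {0..})" .
  from borel_measurable_continuous_on[OF assms(3) this] show ?thesis by simp
qed

definition controlled_field :: "'o \<Rightarrow> (real \<Rightarrow> 'u) \<Rightarrow> real^'i \<Rightarrow> real \<Rightarrow> real^'i" where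
  "controlled_field a \<alpha> x s = clipped_field h a x (\<Lambda> (\<alpha> s))"

definition field_bound :: real where
  "field_bound = flow_bound * real CARD('i) * (1 + real CARD('i) ^ 2)"

definition field_lipschitz :: real where
  "field_lipschitz = flow_bound * (1 + 2 * real CARD('i) ^ 2)"

lemma lipschitz_integral_equation_controlled_field:
  assumes "\<alpha> \<in> Ctrl U"
  shows "lipschitz_integral_equation (controlled_field a \<alpha>) field_bound field_lipschitz"
proof
  fix x y :: "real^'i" and s :: real assume "0 \<le> s"
  then have u: "\<alpha> s \<in> U" using Ctrl_in_U[OF assms] by blast
  show "norm (controlled_field a \<alpha> x s) \<le> field_bound"
    unfolding controlled_field_def field_bound_def
    by (rule norm_clipped_field_le) (rule norm_flow_le[OF u])
  show "norm (controlled_field a \<alpha> x s - controlled_field a \<alpha> y s) \<le> field_lipschitz * norm (x - y)"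
    unfolding controlled_field_def field_lipschitz_def
    by (rule clipped_field_lipschitz) (rule norm_flow_le[OF u])
next
  show "0 \<le> field_lipschitz" using flow_bound_nonneg by (simp add: field_lipschitz_def)
next
  fix z :: "real \<Rightarrow> real^'i" assume "continuous_on {0..} z"
  then show "(\<lambda>s. controlled_field a \<alpha> (z s) s) \<in> borel_measurable (lebesgue_on {0..})"
    unfolding controlled_field_def
    by (intro measurable_along_Ctrl[OF assms] continuous_on_clipped_field)
qed

abbreviation clipped_solution :: "'o \<Rightarrow> (real \<Rightarrow> 'u) \<Rightarrow> real^'i \<Rightarrow> (real \<Rightarrow> real^'i) \<Rightarrow> bool" where
  "clipped_solution a \<alpha> \<equiv> lipschitz_integral_equation.solves (controlled_field a \<alpha>)"

lemma clipped_solution_component: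
  assumes \<alpha>: "\<alpha> \<in> Ctrl U" and z: "clipped_solution a \<alpha> \<rho> z" and t: "0 \<le> t"
  shows "(\<lambda>s. controlled_field a \<alpha> (z s) s $ j) integrable_on {0..t}"
    and "z t $ j = \<rho> $ j + integral {0..t} (\<lambda>s. controlled_field a \<alpha> (z s) s $ j)"
proof -
  interpret lipschitz_integral_equation "controlled_field a \<alpha>" field_bound field_lipschitz
    by (rule lipschitz_integral_equation_controlled_field[OF \<alpha>])
  have int: "(\<lambda>s. controlled_field a \<alpha> (z s) s) integrable_on {0..t}"
    and eq: "z t = \<rho> + integral {0..t} (\<lambda>s. controlled_field a \<alpha> (z s) s)"
    using solvesD[OF z t] by blast+
  show "(\<lambda>s. controlled_field a \<alpha> (z s) s $ j) integrable_on {0..t}"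
    using integrable_linear[OF int bounded_linear_vec_nth] by (simp add: o_def)
  show "z t $ j = \<rho> $ j + integral {0..t} (\<lambda>s. controlled_field a \<alpha> (z s) s $ j)"
    using eq int by simp
qed

lemma clipped_solution_off_block:
  assumes \<alpha>: "\<alpha> \<in> Ctrl U" and \<rho>: "\<rho> \<in> Delta h a" and z: "clipped_solution a \<alpha> \<rho> z"
    and t: "0 \<le> t" and j: "h j \<noteq> a"
  shows "z t $ j = 0"
proof -
  have "controlled_field a \<alpha> x s $ j = 0" for x s
    using j by (simp add: controlled_field_def clipped_field_def block_mask_def clip_def)
  then show ?thesis using clipped_solution_component(2)[OF \<alpha> z t, of j] \<rho> j by (simp add: Delta_def)
qed

lemma clipped_solution_nonneg:
  assumes \<alpha>: "\<alpha> \<in> Ctrl U" and \<rho>: "\<rho> \<in> Delta h a" and z: "clipped_solution a \<alpha> \<rho> z"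
    and t: "0 \<le> t"
  shows "0 \<le> z t $ j"
proof (cases "h j = a")
  case True
  interpret lipschitz_integral_equation "controlled_field a \<alpha>" field_bound field_lipschitz
    by (rule lipschitz_integral_equation_controlled_field[OF \<alpha>])
  let ?g = "\<lambda>s. controlled_field a \<alpha> (z s) s $ j"
  have cont: "continuous_on {0..t} (\<lambda>s. z s $ j)"
    by (intro continuous_intros continuous_on_subset[OF solves_continuous[OF z]]) auto
  have eq: "z s $ j = z 0 $ j + integral {0..s} ?g" if "s \<in> {0..t}" for s
    using clipped_solution_component(2)[OF \<alpha> z, of s j] clipped_solution_component(2)[OF \<alpha> z order_refl, of j]
      that by simp
  have inward: "0 \<le> ?g s" if "s \<in> {0..t}" "z s $ j \<le> 0" for s
  proof -
    have "\<alpha> s \<in> U" using that Ctrl_in_U[OF \<alpha>] by auto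
    then show ?thesis
      unfolding controlled_field_def using that True rate_matrix_Lambda
      by (intro clipped_field_inward) (auto simp: rate_matrix_def)
  qed
  have "z 0 $ j = \<rho> $ j" using clipped_solution_component(2)[OF \<alpha> z order_refl, of j] by simp
  with \<rho> have "0 \<le> z 0 $ j" by (simp add: Delta_def)
  from integral_equation_nonneg[where x="\<lambda>s. z s $ j" and g="?g", OF cont
      clipped_solution_component(1)[OF \<alpha> z t] eq this t inward]
  show ?thesis .
qed (use clipped_solution_off_block[OF assms] in auto)

text \<open>The defect \<open>\<bar>1 - \<Sum>\<^sub>j z t $ j\<bar>\<close> of the total mass satisfies a linear Gronwall
  inequality with zero initial value.\<close>
lemma clipped_solution_mass:
  assumes \<alpha>: "\<alpha> \<in> Ctrl U" and \<rho>: "\<rho> \<in> Delta h a" and z: "clipped_solution a \<alpha> \<rho> z"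
    and t: "0 \<le> t"
  shows "(\<Sum>j\<in>UNIV. z t $ j) = 1"
proof -
  interpret lipschitz_integral_equation "controlled_field a \<alpha>" field_bound field_lipschitz
    by (rule lipschitz_integral_equation_controlled_field[OF \<alpha>])
  define \<sigma> where "\<sigma> x = (\<Sum>j\<in>UNIV. x $ j)" for x :: "real^'i"
  define F where "F = (\<lambda>s. controlled_field a \<alpha> (z s) s)"
  define d where "d s = \<bar>\<sigma> (z s) - 1\<bar>" for s
  define K where "K = real CARD('i) * flow_bound * real CARD('i)"
  have \<sigma>: "bounded_linear \<sigma>"
    unfolding \<sigma>_def by (intro bounded_linear_sum bounded_linear_vec_nth)
  have dc: "continuous_on {0..t} d"
    unfolding d_def \<sigma>_def using solves_continuous[OF z]
    by (intro continuous_intros) (auto intro: continuous_on_subset)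
  have d_le: "d s \<le> 0 + K * integral {0..s} d" if s: "s \<in> {0..t}" for s
  proof -
    have Fi: "F integrable_on {0..s}" and zs: "z s = \<rho> + integral {0..s} F"
      using solvesD[OF z, of s] s by (auto simp: F_def)
    have "d s = norm (integral {0..s} (\<sigma> \<circ> F))"
      using \<rho> by (simp add: d_def zs integral_linear[OF Fi \<sigma>] linear_add[OF bounded_linear.linear[OF \<sigma>]])
        (simp add: \<sigma>_def Delta_def)
    also have "\<dots> \<le> integral {0..s} (\<lambda>r. K * d r)"
    proof (rule integral_norm_bound_integral[OF integrable_linear[OF Fi \<sigma>]])
      show "(\<lambda>r. K * d r) integrable_on {0..s}"
        using s by (intro integrable_continuous_real continuous_intros continuous_on_subset[OF dc]) auto
      fix r assume r: "r \<in> {0..s}"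
      then have "0 \<le> r" "\<alpha> r \<in> U" using Ctrl_in_U[OF \<alpha>, of r] by auto
      then show "norm ((\<sigma> \<circ> F) r) \<le> K * d r"
        using abs_sum_clipped_field_le[OF norm_flow_le, of "\<alpha> r" "z r" h a]
          clipped_solution_nonneg[OF \<alpha> \<rho> z] clipped_solution_off_block[OF \<alpha> \<rho> z]
        by (simp add: F_def controlled_field_def \<sigma>_def d_def K_def abs_minus_commute)
    qed
    finally show ?thesis by simp
  qed
  have "0 \<le> K" using flow_bound_nonneg by (simp add: K_def)
  with gronwall_inequality[OF dc _ d_le, of t] t have "d t \<le> 0" by simp
  then show ?thesis by (simp add: d_def \<sigma>_def)
qed

lemma clipped_solution_in_Delta:
  assumes \<alpha>: "\<alpha> \<in> Ctrl U" and \<rho>: "\<rho> \<in> Delta h a" and z: "clipped_solution a \<alpha> \<rho> z"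
    and t: "0 \<le> t"
  shows "z t \<in> Delta h a"
  using clipped_solution_nonneg[OF assms] clipped_solution_mass[OF assms]
    clipped_solution_off_block[OF assms] by (auto simp: Delta_def)

lemma clipped_solution_iff_Fv:
  assumes \<alpha>: "\<alpha> \<in> Ctrl U" and y: "\<And>s. 0 \<le> s \<Longrightarrow> y s \<in> Delta h a"
  shows "clipped_solution a \<alpha> \<rho> y \<longleftrightarrow> (\<forall>t\<ge>0. (\<lambda>s. Fv h \<Lambda> (y s) (\<alpha> s)) integrable_on {0..t}
    \<and> y t = \<rho> + integral {0..t} (\<lambda>s. Fv h \<Lambda> (y s) (\<alpha> s)))"
proof -
  interpret lipschitz_integral_equation "controlled_field a \<alpha>" field_bound field_lipschitz
    by (rule lipschitz_integral_equation_controlled_field[OF \<alpha>])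
  show ?thesis unfolding solves_def
  proof (intro iff_allI imp_cong refl conj_cong)
    fix t :: real assume "0 \<le> t"
    have "controlled_field a \<alpha> (y s) s = Fv h \<Lambda> (y s) (\<alpha> s)" if "s \<in> {0..t}" for s
      using that by (simp add: controlled_field_def Fv_eq_clipped_field[OF y])
    note same = integrable_cong[OF this] integral_cong[OF this]
    show "(\<lambda>s. controlled_field a \<alpha> (y s) s) integrable_on {0..t}
        \<longleftrightarrow> (\<lambda>s. Fv h \<Lambda> (y s) (\<alpha> s)) integrable_on {0..t}"
      by (rule same(1))
    show "(y t = \<rho> + integral {0..t} (\<lambda>s. controlled_field a \<alpha> (y s) s))
        \<longleftrightarrow> (y t = \<rho> + integral {0..t} (\<lambda>s. Fv h \<Lambda> (y s) (\<alpha> s)))"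
      by (simp only: same(2))
  qed
qed

lemma phi_eq_clipped_solution:
  assumes \<alpha>: "\<alpha> \<in> Ctrl U" and \<rho>: "\<rho> \<in> Delta h a" and z: "clipped_solution a \<alpha> \<rho> z"
  shows "phi h \<Lambda> \<alpha> \<rho> = (\<lambda>t. if t < 0 then \<rho> else z t)"
proof -
  interpret lipschitz_integral_equation "controlled_field a \<alpha>" field_bound field_lipschitz
    by (rule lipschitz_integral_equation_controlled_field[OF \<alpha>])
  define P where "P y \<longleftrightarrow> (\<forall>t<0. y t = \<rho>) \<and> (\<forall>t\<ge>0. y t \<in> Delta h a
      \<and> (\<lambda>s. Fv h \<Lambda> (y s) (\<alpha> s)) integrable_on {0..t}
      \<and> y t = \<rho> + integral {0..t} (\<lambda>s. Fv h \<Lambda> (y s) (\<alpha> s)))" for y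
  have P_iff: "P y \<longleftrightarrow> (\<forall>t<0. y t = \<rho>) \<and> (\<forall>t\<ge>0. y t \<in> Delta h a) \<and> solves \<rho> y" for y
  proof -
    have "(\<forall>t\<ge>0. y t \<in> Delta h a \<and> (\<lambda>s. Fv h \<Lambda> (y s) (\<alpha> s)) integrable_on {0..t}
        \<and> y t = \<rho> + integral {0..t} (\<lambda>s. Fv h \<Lambda> (y s) (\<alpha> s)))
      \<longleftrightarrow> (\<forall>t\<ge>0. y t \<in> Delta h a) \<and> (\<forall>t\<ge>0. (\<lambda>s. Fv h \<Lambda> (y s) (\<alpha> s)) integrable_on {0..t}
        \<and> y t = \<rho> + integral {0..t} (\<lambda>s. Fv h \<Lambda> (y s) (\<alpha> s)))"
      by blast
    also have "\<dots> \<longleftrightarrow> (\<forall>t\<ge>0. y t \<in> Delta h a) \<and> solves \<rho> y"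
      using clipped_solution_iff_Fv[OF \<alpha>, of y] by blast
    finally show ?thesis unfolding P_def by (simp only:)
  qed
  let ?z = "\<lambda>t. if t < 0 then \<rho> else z t"
  have "phi h \<Lambda> \<alpha> \<rho> = (THE y. P y)"
    unfolding phi_def P_def blk_Delta[OF \<rho>] ..
  also have "(THE y. P y) = ?z"
  proof (rule the_equality)
    have "?z t \<in> Delta h a" if "0 \<le> t" for t
      using clipped_solution_in_Delta[OF \<alpha> \<rho> z that] that by simp
    moreover have "solves \<rho> ?z" by (rule solves_cong[OF z]) simp
    ultimately show "P ?z" unfolding P_iff by simp
  next
    fix y assume "P y"
    then have y_neg: "\<And>t. t < 0 \<Longrightarrow> y t = \<rho>" and y: "solves \<rho> y" unfolding P_iff by blast+
    show "y = ?z"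
    proof
      fix t
      have "norm (y t - z t) \<le> 0" if "0 \<le> t"
        using solves_dist_le[OF y z that] by simp
      then show "y t = ?z t" using y_neg[of t] by (cases "t < 0") auto
    qed
  qed
  finally show ?thesis .
qed

lemma phi_clipped_solution:
  assumes \<alpha>: "\<alpha> \<in> Ctrl U" and \<rho>: "\<rho> \<in> Delta h a"
  shows "clipped_solution a \<alpha> \<rho> (phi h \<Lambda> \<alpha> \<rho>)"
proof -
  interpret lipschitz_integral_equation "controlled_field a \<alpha>" field_bound field_lipschitz
    by (rule lipschitz_integral_equation_controlled_field[OF \<alpha>])
  obtain z where z: "solves \<rho> z" using solves_exists by blast
  show ?thesis by (rule solves_cong[OF z]) (simp add: phi_eq_clipped_solution[OF \<alpha> \<rho> z])
qed

lemma phi_in_Delta: "\<alpha> \<in> Ctrl U \<Longrightarrow> \<rho> \<in> Delta h a \<Longrightarrow> 0 \<le> t \<Longrightarrow> phi h \<Lambda> \<alpha> \<rho> t \<in> Delta h a"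
  by (rule clipped_solution_in_Delta[OF _ _ phi_clipped_solution])

lemma continuous_on_phi:
  "\<alpha> \<in> Ctrl U \<Longrightarrow> \<rho> \<in> Delta h a \<Longrightarrow> continuous_on {0..} (phi h \<Lambda> \<alpha> \<rho>)"
  by (rule lipschitz_integral_equation.solves_continuous[OF
        lipschitz_integral_equation_controlled_field phi_clipped_solution])

lemma norm_phi_diff_le:
  assumes \<alpha>: "\<alpha> \<in> Ctrl U" and \<rho>1: "\<rho>1 \<in> Delta h a" and \<rho>2: "\<rho>2 \<in> Delta h a"
    and s: "s \<in> {0..T}"
  shows "norm (phi h \<Lambda> \<alpha> \<rho>1 s - phi h \<Lambda> \<alpha> \<rho>2 s) \<le> norm (\<rho>1 - \<rho>2) * exp (field_lipschitz * T)"
proof -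
  have "field_lipschitz * s \<le> field_lipschitz * T"
    using s flow_bound_nonneg by (intro mult_left_mono) (auto simp: field_lipschitz_def)
  moreover have "norm (phi h \<Lambda> \<alpha> \<rho>1 s - phi h \<Lambda> \<alpha> \<rho>2 s) \<le> norm (\<rho>1 - \<rho>2) * exp (field_lipschitz * s)"
    using s by (intro lipschitz_integral_equation.solves_dist_le[OF
        lipschitz_integral_equation_controlled_field[OF \<alpha>] phi_clipped_solution[OF \<alpha> \<rho>1]
        phi_clipped_solution[OF \<alpha> \<rho>2]]) auto
  ultimately show ?thesis by (auto intro: order_trans[OF _ mult_left_mono])
qed

lemma abs_exit_rate_phi_le:
  assumes "\<alpha> \<in> Ctrl U" "\<rho> \<in> Delta h a" "0 \<le> s"
  shows "\<bar>exit_rate h a (phi h \<Lambda> \<alpha> \<rho> s) (\<Lambda> (\<alpha> s))\<bar> \<le> real CARD('i) * flow_bound"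
  using assms by (intro abs_exit_rate_le[OF norm_flow_le] Ctrl_in_U phi_in_Delta)

lemma integrable_exit_rate_phi:
  assumes \<alpha>: "\<alpha> \<in> Ctrl U" and \<rho>: "\<rho> \<in> Delta h a"
  shows "(\<lambda>s. exit_rate h a (phi h \<Lambda> \<alpha> \<rho> s) (\<Lambda> (\<alpha> s))) integrable_on {0..t}"
  by (rule integrable_on_Icc_if_bounded_measurable[OF measurable_along_Ctrl[OF \<alpha>
        continuous_on_phi[OF \<alpha> \<rho>] continuous_on_exit_rate]])
    (use abs_exit_rate_phi_le[OF \<alpha> \<rho>] in auto)

lemma chi_eq_exit_rate:
  assumes \<alpha>: "\<alpha> \<in> Ctrl U" and \<rho>: "\<rho> \<in> Delta h a"
  shows "chi h \<Lambda> \<alpha> \<rho> t = exp (- integral {0..t} (\<lambda>s. exit_rate h a (phi h \<Lambda> \<alpha> \<rho> s) (\<Lambda> (\<alpha> s))))"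
  unfolding chi_def
  by (intro arg_cong[where f="\<lambda>x. exp (- x)"] integral_cong)
    (simp add: rr_eq_exit_rate phi_in_Delta[OF \<alpha> \<rho>])

lemma integral_exit_rate_phi_nonneg:
  assumes \<alpha>: "\<alpha> \<in> Ctrl U" and \<rho>: "\<rho> \<in> Delta h a"
  shows "0 \<le> integral {0..t} (\<lambda>s. exit_rate h a (phi h \<Lambda> \<alpha> \<rho> s) (\<Lambda> (\<alpha> s)))"
  using Ctrl_in_U[OF \<alpha>] phi_in_Delta[OF \<alpha> \<rho>]
  by (intro integral_nonneg integrable_exit_rate_phi[OF \<alpha> \<rho>] exit_rate_nonneg rate_matrix_Lambda)
    auto

lemma chi_in_unit_interval:
  assumes "\<alpha> \<in> Ctrl U" "\<rho> \<in> Delta h a"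
  shows "chi h \<Lambda> \<alpha> \<rho> t \<in> {0..1}"
  using integral_exit_rate_phi_nonneg[OF assms, of t] by (simp add: chi_eq_exit_rate[OF assms])

lemma continuous_on_chi:
  assumes \<alpha>: "\<alpha> \<in> Ctrl U" and \<rho>: "\<rho> \<in> Delta h a"
  shows "continuous_on {0..} (chi h \<Lambda> \<alpha> \<rho>)"
  unfolding chi_eq_exit_rate[OF assms, abs_def]
  using integrable_exit_rate_phi[OF assms] abs_exit_rate_phi_le[OF assms]
  by (intro continuous_intros continuous_on_integral_from_0) auto

lemma abs_chi_diff_le:
  assumes \<alpha>: "\<alpha> \<in> Ctrl U" and \<rho>1: "\<rho>1 \<in> Delta h a" and \<rho>2: "\<rho>2 \<in> Delta h a"
    and t: "t \<in> {0..T}"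
  shows "\<bar>chi h \<Lambda> \<alpha> \<rho>1 t - chi h \<Lambda> \<alpha> \<rho>2 t\<bar>
    \<le> real CARD('i) * flow_bound * T * (norm (\<rho>1 - \<rho>2) * exp (field_lipschitz * T))"
proof -
  let ?R = "\<lambda>\<rho> s. exit_rate h a (phi h \<Lambda> \<alpha> \<rho> s) (\<Lambda> (\<alpha> s))"
  let ?c = "real CARD('i) * flow_bound * (norm (\<rho>1 - \<rho>2) * exp (field_lipschitz * T))"
  have int: "?R \<rho>1 integrable_on {0..t}" "?R \<rho>2 integrable_on {0..t}"
    using integrable_exit_rate_phi \<alpha> \<rho>1 \<rho>2 by blast+
  have "\<bar>chi h \<Lambda> \<alpha> \<rho>1 t - chi h \<Lambda> \<alpha> \<rho>2 t\<bar> \<le> norm (integral {0..t} (\<lambda>s. ?R \<rho>1 s - ?R \<rho>2 s))"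
    using abs_exp_neg_diff_le[OF integral_exit_rate_phi_nonneg[OF \<alpha> \<rho>1]
        integral_exit_rate_phi_nonneg[OF \<alpha> \<rho>2]]
    by (simp add: chi_eq_exit_rate[OF \<alpha> \<rho>1] chi_eq_exit_rate[OF \<alpha> \<rho>2] integral_diff[OF int])
  also have "\<dots> \<le> integral {0..t} (\<lambda>s. ?c)"
  proof (rule integral_norm_bound_integral[OF integrable_diff[OF int]])
    fix s assume s: "s \<in> {0..t}"
    then have "s \<in> {0..T}" using t by simp
    have "norm (?R \<rho>1 s - ?R \<rho>2 s)
        \<le> real CARD('i) * (flow_bound * norm (phi h \<Lambda> \<alpha> \<rho>1 s - phi h \<Lambda> \<alpha> \<rho>2 s))"
      using s Ctrl_in_U[OF \<alpha>] by (auto intro: abs_exit_rate_diff_le[OF norm_flow_le])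
    also have "\<dots> \<le> ?c"
      using norm_phi_diff_le[OF \<alpha> \<rho>1 \<rho>2 \<open>s \<in> {0..T}\<close>] flow_bound_nonneg
      by (simp add: mult_left_mono)
    finally show "norm (?R \<rho>1 s - ?R \<rho>2 s) \<le> ?c" .
  qed auto
  also have "\<dots> = ?c * t" using t by simp
  also have "\<dots> \<le> ?c * T" using t flow_bound_nonneg by (intro mult_left_mono) auto
  finally show ?thesis by (simp add: algebra_simps)
qed

end

section \<open>Continuity of the value\<close>

context control_problem
begin

definition cost_vector :: "'u \<Rightarrow> real^'i" where
  "cost_vector u = (\<chi> i. f i u)"

definition running_cost :: "'o \<Rightarrow> (real^'i) \<times> real \<times> (real^'i^'i) \<times> (real^'i) \<Rightarrow> real" where
  "running_cost a = (\<lambda>(\<rho>, s, M, c).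
     s * (\<rho> \<bullet> c + (\<Sum>b\<in>UNIV. if b = a then 0 else jump_term h nu0 w b (\<rho> v* M))))"

definition cost_domain :: "'o \<Rightarrow> ((real^'i) \<times> real \<times> (real^'i^'i) \<times> (real^'i)) set" where
  "cost_domain a = Delta h a \<times> {0..1} \<times> (\<lambda>u. (\<Lambda> u, cost_vector u)) ` U"

lemma continuous_on_cost_vector: "continuous_on U cost_vector"
  unfolding cost_vector_def using continuous_f by (intro continuous_on_vec_lambda)

lemma compact_cost_domain: "compact (cost_domain a)"
  unfolding cost_domain_def
  by (intro compact_Times compact_Delta compact_Icc compact_continuous_image continuous_on_Pair
      continuous_Lambda continuous_on_cost_vector U_compact)

lemma continuous_on_running_cost: "continuous_on (cost_domain a) (running_cost a)"
proof -
  let ?vM = "\<lambda>p :: (real^'i) \<times> real \<times> (real^'i^'i) \<times> (real^'i). fst p v* fst (snd (snd p))"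
  define J where "J p = (\<Sum>b\<in>UNIV. if b = a then 0 else jump_term h nu0 w b (?vM p))" for p
  have "continuous_on (cost_domain a) (\<lambda>p. jump_term h nu0 w b (?vM p))" if "b \<noteq> a" for b
  proof (rule continuous_on_compose2[OF continuous_on_jump_term[OF continuous_w nu0_in_Delta]])
    show "continuous_on (cost_domain a) ?vM"
      unfolding vector_matrix_mult_def by (intro continuous_on_vec_lambda continuous_intros)
    show "?vM ` cost_domain a \<subseteq> nonneg_on_block h b"
      using that vector_matrix_mult_nonneg_off_block[OF rate_matrix_Lambda]
      by (auto simp: cost_domain_def nonneg_on_block_def)
  qed
  then have J: "continuous_on (cost_domain a) J"
    unfolding J_def by (intro continuous_on_sum) (case_tac "b = a", simp_all)
  have "running_cost a = (\<lambda>p. fst (snd p) * (fst p \<bullet> snd (snd (snd p)) + J p))"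
    by (simp add: running_cost_def J_def fun_eq_iff cong: if_cong)
  then show ?thesis by (simp only:) (intro continuous_intros J)
qed

definition cost_bound :: "'o \<Rightarrow> real" where
  "cost_bound a = (SUP p\<in>cost_domain a. \<bar>running_cost a p\<bar>)"

lemma abs_running_cost_le: "p \<in> cost_domain a \<Longrightarrow> \<bar>running_cost a p\<bar> \<le> cost_bound a"
  unfolding cost_bound_def
  using compact_imp_bounded[OF compact_continuous_image[OF continuous_on_running_cost compact_cost_domain]]
  by (intro cSUP_upper) (auto simp flip: bdd_above_norm simp: image_image)

lemma cost_bound_nonneg: "0 \<le> cost_bound a"
proof -
  obtain \<nu> where "\<nu> \<in> Delta h a" using nu0_in_Delta by blast
  moreover obtain u where "u \<in> U" using U_nonempty by blast
  ultimately have "(\<nu>, 0, \<Lambda> u, cost_vector u) \<in> cost_domain a" by (auto simp: cost_domain_def)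
  from order_trans[OF abs_ge_zero abs_running_cost_le[OF this]] show ?thesis .
qed

lemma LL_eq_running_cost:
  assumes "\<rho> \<in> Delta h a" "u \<in> U"
  shows "LL h \<Lambda> f nu0 qd \<rho> s u w = running_cost a (\<rho>, s, \<Lambda> u, cost_vector u)"
  using LL_eq_jump_terms[where \<Lambda>=\<Lambda> and u=u, OF assms(1) rate_matrix_Lambda[OF assms(2)]]
  by (simp add: running_cost_def cost_vector_def inner_vec_def)

definition state :: "(real \<Rightarrow> 'u) \<Rightarrow> real^'i \<Rightarrow> real \<Rightarrow> (real^'i) \<times> real \<times> (real^'i^'i) \<times> (real^'i)" where
  "state \<alpha> \<rho> t = (phi h \<Lambda> \<alpha> \<rho> t, chi h \<Lambda> \<alpha> \<rho> t, \<Lambda> (\<alpha> t), cost_vector (\<alpha> t))"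

lemma state_in_cost_domain:
  "\<alpha> \<in> Ctrl U \<Longrightarrow> \<rho> \<in> Delta h a \<Longrightarrow> 0 \<le> t \<Longrightarrow> state \<alpha> \<rho> t \<in> cost_domain a"
  using phi_in_Delta chi_in_unit_interval Ctrl_in_U by (auto simp: state_def cost_domain_def)

lemma measurable_state:
  assumes \<alpha>: "\<alpha> \<in> Ctrl U" and \<rho>: "\<rho> \<in> Delta h a"
  shows "state \<alpha> \<rho> \<in> measurable (lebesgue_on {0..}) (restrict_space borel (cost_domain a))"
proof (rule measurable_restrict_space2)
  show "state \<alpha> \<rho> \<in> space (lebesgue_on {0..}) \<rightarrow> cost_domain a"
    using state_in_cost_domain[OF \<alpha> \<rho>] by (auto simp: space_restrict_space)
  have "phi h \<Lambda> \<alpha> \<rho> \<in> borel_measurable (lebesgue_on {0..})"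
    "chi h \<Lambda> \<alpha> \<rho> \<in> borel_measurable (lebesgue_on {0..})"
    by (auto intro!: continuous_imp_measurable_on_sets_lebesgue continuous_on_phi[OF \<alpha> \<rho>]
        continuous_on_chi[OF \<alpha> \<rho>])
  then show "state \<alpha> \<rho> \<in> borel_measurable (lebesgue_on {0..})"
    unfolding state_def
    by (intro borel_measurable_Pair measurable_Ctrl_comp[OF \<alpha>] continuous_Lambda continuous_on_cost_vector)
qed

lemma dist_state_le:
  assumes \<alpha>: "\<alpha> \<in> Ctrl U" and \<rho>1: "\<rho>1 \<in> Delta h a" and \<rho>2: "\<rho>2 \<in> Delta h a"
    and t: "t \<in> {0..T}"
  shows "dist (state \<alpha> \<rho>1 t) (state \<alpha> \<rho>2 t)
    \<le> exp (field_lipschitz * T) * (1 + real CARD('i) * flow_bound * T) * norm (\<rho>1 - \<rho>2)"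
proof -
  have "dist (state \<alpha> \<rho>1 t) (state \<alpha> \<rho>2 t)
      \<le> dist (phi h \<Lambda> \<alpha> \<rho>1 t) (phi h \<Lambda> \<alpha> \<rho>2 t) + dist (chi h \<Lambda> \<alpha> \<rho>1 t) (chi h \<Lambda> \<alpha> \<rho>2 t)"
    unfolding state_def by (rule dist_Pair_Pair_same_le)
  also have "\<dots> \<le> norm (\<rho>1 - \<rho>2) * exp (field_lipschitz * T)
      + real CARD('i) * flow_bound * T * (norm (\<rho>1 - \<rho>2) * exp (field_lipschitz * T))"
    using norm_phi_diff_le[OF \<alpha> \<rho>1 \<rho>2 t] abs_chi_diff_le[OF \<alpha> \<rho>1 \<rho>2 t]
    by (simp add: dist_norm dist_real_def)
  finally show ?thesis by (simp add: algebra_simps)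
qed

definition payoff :: "(real \<Rightarrow> 'u) \<Rightarrow> real^'i \<Rightarrow> real \<Rightarrow> real" where
  "payoff \<alpha> \<rho> t = exp (- \<beta> * t) * LL h \<Lambda> f nu0 qd (phi h \<Lambda> \<alpha> \<rho> t) (chi h \<Lambda> \<alpha> \<rho> t) (\<alpha> t) w"

lemma payoff_eq_running_cost:
  assumes "\<alpha> \<in> Ctrl U" "\<rho> \<in> Delta h a" "0 \<le> t"
  shows "payoff \<alpha> \<rho> t = exp (- \<beta> * t) * running_cost a (state \<alpha> \<rho> t)"
  using LL_eq_running_cost[OF phi_in_Delta[OF assms] Ctrl_in_U[OF assms(1,3)]]
  by (simp add: payoff_def state_def)

lemma abs_payoff_le:
  assumes "\<alpha> \<in> Ctrl U" "\<rho> \<in> Delta h a" "0 \<le> t"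
  shows "\<bar>payoff \<alpha> \<rho> t\<bar> \<le> cost_bound a * exp (- \<beta> * t)"
  using abs_running_cost_le[OF state_in_cost_domain[OF assms]]
  by (simp add: payoff_eq_running_cost[OF assms] abs_mult mult.commute)

lemma payoff_absolutely_integrable:
  assumes \<alpha>: "\<alpha> \<in> Ctrl U" and \<rho>: "\<rho> \<in> Delta h a"
  shows "payoff \<alpha> \<rho> absolutely_integrable_on {0..}"
proof (rule measurable_bounded_by_integrable_imp_absolutely_integrable)
  have m: "(\<lambda>t. running_cost a (state \<alpha> \<rho> t)) \<in> borel_measurable (lebesgue_on {0..})"
    using measurable_comp[OF measurable_state[OF \<alpha> \<rho>]
        borel_measurable_continuous_on_restrict[OF continuous_on_running_cost]]
    by (simp add: comp_def)
  have "(\<lambda>t. exp (- \<beta> * t) * running_cost a (state \<alpha> \<rho> t)) \<in> borel_measurable (lebesgue_on {0..})"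
    by (intro borel_measurable_times[OF _ m] continuous_imp_measurable_on_sets_lebesgue
        continuous_intros) auto
  then show "payoff \<alpha> \<rho> \<in> borel_measurable (lebesgue_on {0..})"
    by (rule measurable_cong[THEN iffD1, rotated])
      (simp add: space_restrict_space payoff_eq_running_cost[OF \<alpha> \<rho>])
  show "(\<lambda>t. cost_bound a * exp (- \<beta> * t)) integrable_on {0..}"
    using has_integral_mult_right[OF has_integral_exp_minus_to_infinity[OF beta_pos, of 0]]
    by blast
qed (use abs_payoff_le[OF \<alpha> \<rho>] in auto)

lemma integrable_payoff: "\<alpha> \<in> Ctrl U \<Longrightarrow> \<rho> \<in> Delta h a \<Longrightarrow> payoff \<alpha> \<rho> integrable_on {0..}"
  using payoff_absolutely_integrable set_lebesgue_integral_eq_integral(1) by blast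

lemma GG_eq_INF_integral_payoff:
  assumes \<rho>: "\<rho> \<in> Delta h a"
  shows "GG h U \<Lambda> f \<beta> nu0 qd w \<rho> = (INF \<alpha>\<in>Ctrl U. integral {0..} (payoff \<alpha> \<rho>))"
  unfolding GG_def
proof (rule INF_cong[OF refl])
  fix \<alpha> assume "\<alpha> \<in> Ctrl U"
  from set_lebesgue_integral_eq_integral(2)[OF payoff_absolutely_integrable[OF this \<rho>]]
  show "(LINT t:{0..}|lebesgue. exp (- \<beta> * t) *
      LL h \<Lambda> f nu0 qd (phi h \<Lambda> \<alpha> \<rho> t) (chi h \<Lambda> \<alpha> \<rho> t) (\<alpha> t) w) = integral {0..} (payoff \<alpha> \<rho>)"
    by (simp add: payoff_def)
qed

lemma abs_integral_payoff_le:
  assumes \<alpha>: "\<alpha> \<in> Ctrl U" and \<rho>: "\<rho> \<in> Delta h a"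
  shows "\<bar>integral {0..} (payoff \<alpha> \<rho>)\<bar> \<le> cost_bound a / \<beta>"
proof -
  have exp_int: "((\<lambda>t. cost_bound a * exp (- \<beta> * t)) has_integral cost_bound a / \<beta>) {0..}"
    using has_integral_mult_right[OF has_integral_exp_minus_to_infinity[OF beta_pos, of 0]] by simp
  have "norm (integral {0..} (payoff \<alpha> \<rho>)) \<le> integral {0..} (\<lambda>t. cost_bound a * exp (- \<beta> * t))"
    using exp_int abs_payoff_le[OF \<alpha> \<rho>]
    by (intro integral_norm_bound_integral integrable_payoff[OF \<alpha> \<rho>]) auto
  then show ?thesis using integral_unique[OF exp_int] by simp
qed

lemma abs_payoff_diff_eq:
  assumes "\<alpha> \<in> Ctrl U" "\<rho>1 \<in> Delta h a" "\<rho>2 \<in> Delta h a" "0 \<le> t"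
  shows "\<bar>payoff \<alpha> \<rho>1 t - payoff \<alpha> \<rho>2 t\<bar>
    = \<bar>running_cost a (state \<alpha> \<rho>1 t) - running_cost a (state \<alpha> \<rho>2 t)\<bar> * exp (- \<beta> * t)"
  using assms by (simp add: payoff_eq_running_cost abs_mult right_diff_distrib[symmetric] mult.commute)

text \<open>Up to a horizon \<open>T\<close>, the states of two trajectories stay \<open>C\<^sub>T |\<rho>\<^sub>1 - \<rho>\<^sub>2|\<close>-close, so
  uniform continuity of the running cost controls the payoffs; the discount makes the
  remaining tail uniformly small.\<close>
lemma integral_payoff_uniformly_equicontinuous:
  assumes \<epsilon>: "0 < \<epsilon>"
  shows "\<exists>\<delta>>0. \<forall>\<rho>1\<in>Delta h a. \<forall>\<rho>2\<in>Delta h a. dist \<rho>1 \<rho>2 < \<delta> \<longrightarrow>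
    (\<forall>\<alpha>\<in>Ctrl U. \<bar>integral {0..} (payoff \<alpha> \<rho>1) - integral {0..} (payoff \<alpha> \<rho>2)\<bar> \<le> \<epsilon>)"
proof -
  define L where "L = cost_bound a"
  define \<eta> where "\<eta> = \<epsilon> * \<beta> / 4"
  have L: "0 \<le> L" by (simp add: L_def cost_bound_nonneg)
  have \<eta>: "0 < \<eta>" using \<epsilon> beta_pos by (simp add: \<eta>_def)
  obtain T where T: "0 < T" and eT: "exp (- (\<beta> / 2) * T) \<le> \<epsilon> * \<beta> / (8 * (L + 1))"
    using exists_exp_neg_le[of "\<beta> / 2" "\<epsilon> * \<beta> / (8 * (L + 1))"] \<epsilon> beta_pos L by auto
  have tail: "2 * L * exp (- (\<beta> / 2) * T) \<le> \<epsilon> * \<beta> / 4"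
  proof -
    have "2 * L * exp (- (\<beta> / 2) * T) \<le> 2 * L * (\<epsilon> * \<beta> / (8 * (L + 1)))"
      using eT L by (intro mult_left_mono) auto
    also have "\<dots> = \<epsilon> * \<beta> / 4 * (L / (L + 1))" using L by (simp add: field_simps)
    also have "\<dots> \<le> \<epsilon> * \<beta> / 4" using L \<epsilon> beta_pos by (intro mult_left_le) auto
    finally show ?thesis .
  qed
  obtain \<delta>0 where \<delta>0: "0 < \<delta>0" and uc: "\<And>p p'. p \<in> cost_domain a \<Longrightarrow> p' \<in> cost_domain a \<Longrightarrow>
      dist p' p < \<delta>0 \<Longrightarrow> dist (running_cost a p') (running_cost a p) < \<eta>"
    using compact_uniformly_continuous[OF continuous_on_running_cost compact_cost_domain] \<eta>
    unfolding uniformly_continuous_on_def by metis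
  define C where "C = exp (field_lipschitz * T) * (1 + real CARD('i) * flow_bound * T)"
  have "1 \<le> exp (field_lipschitz * T)" "1 \<le> 1 + real CARD('i) * flow_bound * T"
    using T flow_bound_nonneg by (auto simp: field_lipschitz_def)
  then have C: "1 \<le> C" unfolding C_def using mult_mono[of 1 _ 1] by fastforce
  show ?thesis
  proof (intro exI[of _ "\<delta>0 / C"] conjI ballI impI)
    show "0 < \<delta>0 / C" using \<delta>0 C by simp
    fix \<rho>1 \<rho>2 \<alpha> assume \<rho>1: "\<rho>1 \<in> Delta h a" and \<rho>2: "\<rho>2 \<in> Delta h a"
      and d: "dist \<rho>1 \<rho>2 < \<delta>0 / C" and \<alpha>: "\<alpha> \<in> Ctrl U"
    note diff = abs_payoff_diff_eq[OF \<alpha> \<rho>1 \<rho>2]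
    have near: "\<bar>payoff \<alpha> \<rho>1 t - payoff \<alpha> \<rho>2 t\<bar> \<le> \<eta> * exp (- \<beta> * t)" if t: "t \<in> {0..T}" for t
    proof -
      have "dist (state \<alpha> \<rho>1 t) (state \<alpha> \<rho>2 t) \<le> C * norm (\<rho>1 - \<rho>2)"
        unfolding C_def by (rule dist_state_le[OF \<alpha> \<rho>1 \<rho>2 t])
      also have "\<dots> < \<delta>0" using d C by (simp add: dist_norm field_simps)
      finally have "\<bar>running_cost a (state \<alpha> \<rho>1 t) - running_cost a (state \<alpha> \<rho>2 t)\<bar> \<le> \<eta>"
        using uc[OF state_in_cost_domain[OF \<alpha> \<rho>2] state_in_cost_domain[OF \<alpha> \<rho>1], of t t] t
        by (auto simp: dist_real_def)
      then show ?thesis using diff[of t] t by (auto intro: mult_right_mono)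
    qed
    have far: "\<bar>payoff \<alpha> \<rho>1 t - payoff \<alpha> \<rho>2 t\<bar> \<le> (2 * L) * exp (- \<beta> * t)" if "0 \<le> t" for t
      using that diff[of t] abs_running_cost_le[OF state_in_cost_domain[OF \<alpha> \<rho>1 that]]
        abs_running_cost_le[OF state_in_cost_domain[OF \<alpha> \<rho>2 that]]
      by (auto simp: L_def intro!: mult_right_mono)
    have "\<bar>integral {0..} (payoff \<alpha> \<rho>1) - integral {0..} (payoff \<alpha> \<rho>2)\<bar>
        \<le> 2 * (\<eta> + 2 * L * exp (- (\<beta> / 2) * T)) / \<beta>"
      using discounted_integral_diff_le[OF beta_pos integrable_payoff[OF \<alpha> \<rho>1]
          integrable_payoff[OF \<alpha> \<rho>2], of \<eta> "2 * L" T] near far \<eta> L by (simp add: mult.assoc)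
    also have "\<dots> \<le> \<epsilon>"
      using tail beta_pos by (simp add: \<eta>_def field_simps)
    finally show "\<bar>integral {0..} (payoff \<alpha> \<rho>1) - integral {0..} (payoff \<alpha> \<rho>2)\<bar> \<le> \<epsilon>" .
  qed
qed

lemma continuous_on_GG_Delta: "continuous_on (Delta h a) (GG h U \<Lambda> f \<beta> nu0 qd w)"
proof -
  have "continuous_on (Delta h a) (\<lambda>\<rho>. INF \<alpha>\<in>Ctrl U. integral {0..} (payoff \<alpha> \<rho>))"
  proof (rule continuous_on_INF_equicontinuous[OF Ctrl_nonempty])
    fix \<rho> assume "\<rho> \<in> Delta h a"
    then show "bdd_below ((\<lambda>\<alpha>. integral {0..} (payoff \<alpha> \<rho>)) ` Ctrl U)"
      using abs_integral_payoff_le by (intro bdd_belowI2[where m="- (cost_bound a / \<beta>)"]) force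
  next
    fix \<rho> and \<epsilon> :: real assume "\<rho> \<in> Delta h a" "0 < \<epsilon>"
    then show "\<exists>\<delta>>0. \<forall>\<rho>'\<in>Delta h a. dist \<rho>' \<rho> < \<delta> \<longrightarrow>
        (\<forall>\<alpha>\<in>Ctrl U. \<bar>integral {0..} (payoff \<alpha> \<rho>') - integral {0..} (payoff \<alpha> \<rho>)\<bar> \<le> \<epsilon>)"
      using integral_payoff_uniformly_equicontinuous by blast
  qed
  then show ?thesis by (rule continuous_on_eq) (simp add: GG_eq_INF_integral_payoff)
qed

lemma continuous_on_GG: "continuous_on (Delta_e h) (GG h U \<Lambda> f \<beta> nu0 qd w)"
  unfolding Delta_e_def
  by (intro continuous_on_closed_Union closed_Delta continuous_on_GG_Delta) auto

end

theorem mainTheorem11: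
  fixes h :: "'i::finite \<Rightarrow> 'o::finite"
    and U :: "'u::metric_space set"
    and \<Lambda> :: "'u \<Rightarrow> real^'i^'i"
    and f :: "'i \<Rightarrow> 'u \<Rightarrow> real"
    and \<beta> :: real
    and nu0 :: "'o \<Rightarrow> real^'i"
    and qd :: "'o \<Rightarrow> 'o \<Rightarrow> real"
    and w :: "real^'i \<Rightarrow> real"
  assumes h_surj: "surj h"
    and h_nonconst: "\<exists>i j. h i \<noteq> h j"
    and U_compact: "compact U"
    and Lambda_offdiag: "\<forall>u\<in>U. \<forall>i j. i \<noteq> j \<longrightarrow> 0 \<le> \<Lambda> u $ i $ j"
    and Lambda_rows: "\<forall>u\<in>U. \<forall>i. (\<Sum>j\<in>UNIV. \<Lambda> u $ i $ j) = 0"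
    and beta_pos: "\<beta> > 0"
    and nu0_in: "\<forall>b. nu0 b \<in> Delta h b"
    and qd_prob: "\<forall>a. (\<forall>b. 0 \<le> qd a b) \<and> qd a a = 0 \<and> (\<Sum>b\<in>UNIV. qd a b) = 1"
    and Lambda_cont: "\<forall>i j. continuous_on U (\<lambda>u. \<Lambda> u $ i $ j)"
    and f_cont: "\<forall>i. continuous_on U (f i)"
    and w_cont: "continuous_on (Delta_e h) w"
  shows "continuous_on (Delta_e h) (GG h U \<Lambda> f \<beta> nu0 qd w)"
proof (cases "U = {}")
  case True
  then have "Ctrl U = {}" by (auto simp: Ctrl_def)
  then show ?thesis by (simp add: GG_def)
next
  case False
  have "continuous_on U (\<lambda>u. \<chi> i j. \<Lambda> u $ i $ j)"
    using Lambda_cont by (intro continuous_on_vec_lambda) auto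
  then interpret control_problem h U \<Lambda> f \<beta> nu0 qd w
    using assms False by unfold_locales (auto simp: rate_matrix_def)
  show ?thesis by (rule continuous_on_GG)
qed

end
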